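(* Let $\mathcal{T}$ be a planar triangulation, $m\in\mathbb{Z}_{\ge0}$, $r\in\mathbb{Z}_{\ge-1}$, and $\mathbf{r}$ a smoothness distribution with $\mathbf r(\tau)\in\{r,-1\}$ for all interior edges, such that $\mathcal{Q}^{\mathbf r}$ is lower-acyclic. Let $\sigma$ be a face bounded by edges $\tau_1,\tau_2,\tau_3$, and let $\gamma_i=\tau_i\cap\tau_{i+1}$ (indices cyclic in $1,2,3$) be interior vertices of $\mathcal{T}$. Assume that for all $i\in\{1,2,3\}$: $\mathbf{r}(\tau_i)=r$, and $\mathbf{r}(\tau)\neq-1$ for every edge $\tau$ incident on $\gamma_i$. Suppose $\gamma_i$ has $n_i$ distinct slopes, and put $t_i=\min\{r+2,n_i\}$ and $\Omega_i=r+\left\lceil\frac{r+1}{t_i-1}\right\rceil$ for $i=1,2,3$. If $$m>\frac{\Omega_1+\Omega_2+\Omega_3-3}{2},$$ then $\mathcal{Q}^{\mathbf s}$ is lower-acyclic, where $\mathbf s(\tau)=\mathbf r(\tau)$ for interior edges $\tau\notin\{\tau_1,\tau_2,\tau_3\}$ and $\mathbf s(\tau_i)=-1$ for $i=1,2,3$.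
   Context: $\mathcal{T}$ is a finite planar triangulation of a closed polygonal region $\Omega\subset\mathbb{R}^2$ (possibly not simply connected). An edge or vertex is interior if not contained in $\partial\Omega$; $\mathcal{T}^\circ_1,\mathcal{T}^\circ_0$ denote interior edges and vertices, $\mathcal{T}_2$ the faces. The number of distinct slopes at a vertex $\gamma$ is the number of distinct directions (lines through $\gamma$) among the edges containing $\gamma$. ${\mathcal{P}}_m$ is the space of real bivariate polynomials of total degree at most $m$; $\langle f_1,\dots,f_k\rangle$ denotes the subspace of ${\mathcal{P}}_m$ of polynomial combinations $\sum g_if_i$ lying in ${\mathcal{P}}_m$. A smoothness distribution is a map $\mathbf{r}:\mathcal{T}^\circ_1\to\mathbb{Z}_{\ge -1}$. For $\tau\in\mathcal{T}^\circ_1$ with vanishing affine-linear form $\ell_\tau$, $\mathfrak{J}^{\mathbf r}_\tau=\langle \ell_\tau^{\mathbf r(\tau)+1}\rangle$ (equal to ${\mathcal{P}}_m$ if $\mathbf r(\tau)=-1$); for $\gamma\in\mathcal{T}^\circ_0$, $\mathfrak{J}^{\mathbf r}_\gamma=\sum_{\tau\ni\gamma}\mathfrak{J}^{\mathbf r}_\tau$. $\mathcal{C}$ is the chain complex $\bigoplus_{\sigma\in\mathcal{T}_2}{\mathcal{P}}_m\to\bigoplus_{\tau\in\mathcal{T}^\circ_1}{\mathcal{P}}_m\to\bigoplus_{\gamma\in\mathcal{T}^\circ_0}{\mathcal{P}}_m$ (degrees $2,1,0$) with the cellular boundary maps of $\mathcal{T}$ relative to $\partial\Omega$ (signs $\pm1$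 from fixed orientations); $\mathcal{I}^{\mathbf r}$ is the subcomplex $0\to\bigoplus_\tau\mathfrak{J}^{\mathbf r}_\tau\to\bigoplus_\gamma\mathfrak{J}^{\mathbf r}_\gamma$; $\mathcal{Q}^{\mathbf r}=\mathcal{C}/\mathcal{I}^{\mathbf r}$, whose $H_2$ is the space of piecewise polynomials in ${\mathcal{P}}_m$ that are $C^{\mathbf r(\tau)}$ across each interior edge $\tau$. $\mathcal{Q}^{\mathbf r}$ is lower-acyclic if $H_1(\mathcal{Q}^{\mathbf r})=H_0(\mathcal{Q}^{\mathbf r})=0$. *)

theory Defs
  imports "HOL-Analysis.Analysis"
begin

type_synonym pt = "real \<times> real"

definition triangulation :: "pt set set \<Rightarrow> bool" where
  "triangulation T \<longleftrightarrow> finite T \<and>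
     (\<forall>\<sigma>\<in>T. card \<sigma> = 3 \<and> \<not> affine_dependent \<sigma>) \<and>
     (\<forall>\<sigma>\<in>T. \<forall>\<sigma>'\<in>T. convex hull \<sigma> \<inter> convex hull \<sigma>' = convex hull (\<sigma> \<inter> \<sigma>'))"

definition region :: "pt set set \<Rightarrow> pt set" where
  "region T = (\<Union>\<sigma>\<in>T. convex hull \<sigma>)"

definition edges :: "pt set set \<Rightarrow> pt set set" where
  "edges T = {\<tau>. card \<tau> = 2 \<and> (\<exists>\<sigma>\<in>T. \<tau> \<subseteq> \<sigma>)}"

definition int_edges :: "pt set set \<Rightarrow> pt set set" where
  "int_edges T = {\<tau> \<in> edges T. \<not> (convex hull \<tau> \<subseteq> frontier (region T))}"

definition int_verts :: "pt set set \<Rightarrow> pt set" where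
  "int_verts T = {v \<in> \<Union>T. v \<notin> frontier (region T)}"

definition nslopes :: "pt set set \<Rightarrow> pt \<Rightarrow> nat" where
  "nslopes T v = card ((\<lambda>\<tau>. affine hull \<tau>) ` {\<tau> \<in> edges T. v \<in> \<tau>})"

text \<open>Fixed orientations: edges oriented from lexicographically smaller to larger
endpoint; faces oriented counterclockwise.\<close>
definition lexless :: "pt \<Rightarrow> pt \<Rightarrow> bool" where
  "lexless a b \<longleftrightarrow> fst a < fst b \<or> (fst a = fst b \<and> snd a < snd b)"

definition lmin :: "pt set \<Rightarrow> pt" where
  "lmin \<tau> = (THE a. a \<in> \<tau> \<and> (\<forall>x\<in>\<tau>. x \<noteq> a \<longrightarrow> lexless a x))"

definition lmax :: "pt set \<Rightarrow> pt" where
  "lmax \<tau> = (THE b. b \<in> \<tau> \<and> (\<forall>x\<in>\<tau>. x \<noteq> b \<longrightarrow> lexless x b))"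

definition det2 :: "pt \<Rightarrow> pt \<Rightarrow> real" where
  "det2 u v = fst u * snd v - snd u * fst v"

text \<open>Coefficient of the vertex \<gamma> in the boundary of the oriented edge \<tau>.\<close>
definition edge_vsign :: "pt set \<Rightarrow> pt \<Rightarrow> real" where
  "edge_vsign \<tau> \<gamma> = (if \<gamma> = lmax \<tau> then 1 else if \<gamma> = lmin \<tau> then -1 else 0)"

text \<open>Coefficient of the oriented edge \<tau> in the boundary of the (ccw) face \<sigma>.\<close>
definition face_esign :: "pt set \<Rightarrow> pt set \<Rightarrow> real" where
  "face_esign \<sigma> \<tau> = (if \<tau> \<subseteq> \<sigma> \<and> card \<tau> = 2 \<and> card \<sigma> = 3
      then sgn (det2 (lmax \<tau> - lmin \<tau>) ((THE c. c \<in> \<sigma> - \<tau>) - lmin \<tau>)) else 0)"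

text \<open>Bivariate real polynomials, represented as polynomial functions on the plane.\<close>
definition poly_fun :: "(pt \<Rightarrow> real) \<Rightarrow> bool" where
  "poly_fun p \<longleftrightarrow> (\<exists>c :: nat \<Rightarrow> nat \<Rightarrow> real. \<exists>N.
      \<forall>x y. p (x, y) = (\<Sum>i\<le>N. \<Sum>j\<le>N. c i j * x ^ i * y ^ j))"

definition Pm :: "nat \<Rightarrow> (pt \<Rightarrow> real) set" where
  "Pm m = {p. \<exists>c :: nat \<Rightarrow> nat \<Rightarrow> real.
      \<forall>x y. p (x, y) = (\<Sum>i\<le>m. \<Sum>j\<le>m - i. c i j * x ^ i * y ^ j)}"

definition lform :: "pt set \<Rightarrow> pt \<Rightarrow> real" where
  "lform \<tau> z = det2 (lmax \<tau> - lmin \<tau>) (z - lmin \<tau>)"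

definition J_edge :: "nat \<Rightarrow> (pt set \<Rightarrow> int) \<Rightarrow> pt set \<Rightarrow> (pt \<Rightarrow> real) set" where
  "J_edge m rr \<tau> = {q \<in> Pm m. \<exists>g. poly_fun g \<and>
      q = (\<lambda>z. g z * lform \<tau> z ^ nat (rr \<tau> + 1))}"

definition J_vert :: "pt set set \<Rightarrow> nat \<Rightarrow> (pt set \<Rightarrow> int) \<Rightarrow> pt \<Rightarrow> (pt \<Rightarrow> real) set" where
  "J_vert T m rr \<gamma> = {q. \<exists>f. (\<forall>\<tau>\<in>int_edges T. \<gamma> \<in> \<tau> \<longrightarrow> f \<tau> \<in> J_edge m rr \<tau>) \<and>
      q = (\<lambda>z. \<Sum>\<tau>\<in>{\<tau> \<in> int_edges T. \<gamma> \<in> \<tau>}. f \<tau> z)}"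

text \<open>Boundary maps of the chain complex C (relative to the boundary of the region).\<close>
definition bd1 :: "pt set set \<Rightarrow> (pt set \<Rightarrow> pt \<Rightarrow> real) \<Rightarrow> pt \<Rightarrow> pt \<Rightarrow> real" where
  "bd1 T f \<gamma> = (\<lambda>z. \<Sum>\<tau>\<in>int_edges T. edge_vsign \<tau> \<gamma> * f \<tau> z)"

definition bd2 :: "pt set set \<Rightarrow> (pt set \<Rightarrow> pt \<Rightarrow> real) \<Rightarrow> pt set \<Rightarrow> pt \<Rightarrow> real" where
  "bd2 T h \<tau> = (\<lambda>z. \<Sum>\<sigma>\<in>T. face_esign \<sigma> \<tau> * h \<sigma> z)"

text \<open>H_0(Q^r) = 0: the induced map Q_1 \<rightarrow> Q_0 is surjective.\<close>
definition H0_vanishes :: "pt set set \<Rightarrow> nat \<Rightarrow> (pt set \<Rightarrow> int) \<Rightarrow> bool" where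
  "H0_vanishes T m rr \<longleftrightarrow> (\<forall>g. (\<forall>\<gamma>\<in>int_verts T. g \<gamma> \<in> Pm m) \<longrightarrow>
     (\<exists>f. (\<forall>\<tau>\<in>int_edges T. f \<tau> \<in> Pm m) \<and>
          (\<forall>\<gamma>\<in>int_verts T. (\<lambda>z. bd1 T f \<gamma> z - g \<gamma> z) \<in> J_vert T m rr \<gamma>)))"

text \<open>H_1(Q^r) = 0: every cycle of Q_1 is a boundary of Q_2.\<close>
definition H1_vanishes :: "pt set set \<Rightarrow> nat \<Rightarrow> (pt set \<Rightarrow> int) \<Rightarrow> bool" where
  "H1_vanishes T m rr \<longleftrightarrow> (\<forall>f. (\<forall>\<tau>\<in>int_edges T. f \<tau> \<in> Pm m) \<and>
       (\<forall>\<gamma>\<in>int_verts T. bd1 T f \<gamma> \<in> J_vert T m rr \<gamma>) \<longrightarrow>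
     (\<exists>h. (\<forall>\<sigma>\<in>T. h \<sigma> \<in> Pm m) \<and>
          (\<forall>\<tau>\<in>int_edges T. (\<lambda>z. f \<tau> z - bd2 T h \<tau> z) \<in> J_edge m rr \<tau>)))"

definition lower_acyclic :: "pt set set \<Rightarrow> nat \<Rightarrow> (pt set \<Rightarrow> int) \<Rightarrow> bool" where
  "lower_acyclic T m rr \<longleftrightarrow> H1_vanishes T m rr \<and> H0_vanishes T m rr"

end

(* A barycentric monomial of degree m on the face is a product of powers of the two
   coordinates vanishing at some vertex gamma_i of total degree at least Omega_i, because
   2 m > Omega_1 + Omega_2 + Omega_3 - 3. At gamma_i, where the smoothness is r on all edges,
   the (r+1)-st powers of the n_i edge forms span all binary forms of degree Omega_i in these
   coordinates: a linear functional killing them is, by apolarity, a polynomial with roots of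
   multiplicity Omega_i - r at n_i points of the projective line, impossible as
   (Omega_i - r) n_i > Omega_i. Hence P_m = J_gamma_1 + J_gamma_2 + J_gamma_3. Dropping the
   smoothness on the three edges only enlarges the ideals, which keeps H_0 = 0, and a cycle
   for the relaxed distribution is turned into one for r by moving, across each edge of the
   face, the parts of its vertex boundaries lying in the ideal of the other endpoint; it then
   bounds because H_1 = 0 for r. *)

theory Submission
  imports Defs "Jordan_Normal_Form.Determinant"
begin

section \<open>Spanning binary forms by powers of linear forms\<close>

text \<open>\<open>A A\<^sup>T\<close> is invertible since \<open>v \<bullet> A A\<^sup>T v = |A\<^sup>T v|\<^sup>2\<close>; then \<open>x = A\<^sup>T (A A\<^sup>T)\<^sup>-\<^sup>1 b\<close>.\<close>
lemma mat_vec_surj_if_transpose_inj: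
  fixes A :: "'a :: linordered_field mat"
  assumes A: "A \<in> carrier_mat n k"
    and inj: "\<And>v. v \<in> carrier_vec n \<Longrightarrow> transpose_mat A *\<^sub>v v = 0\<^sub>v k \<Longrightarrow> v = 0\<^sub>v n"
    and b: "b \<in> carrier_vec n"
  shows "\<exists>x \<in> carrier_vec k. A *\<^sub>v x = b"
proof -
  define B where "B = A * transpose_mat A"
  have B: "B \<in> carrier_mat n n" unfolding B_def using A by simp
  have "det B \<noteq> 0"
  proof
    assume "det B = 0"
    then obtain v where v: "v \<in> carrier_vec n" "v \<noteq> 0\<^sub>v n" "B *\<^sub>v v = 0\<^sub>v n"
      using det_0_iff_vec_prod_zero_field[OF B] by auto
    define w where "w = transpose_mat A *\<^sub>v v"
    have w: "w \<in> carrier_vec k" unfolding w_def using A v by simp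
    have "A *\<^sub>v w = 0\<^sub>v n"
      unfolding w_def using v A by (metis B_def assoc_mult_mat_vec transpose_carrier_mat)
    then have "w \<bullet> w = 0"
      using transpose_vec_mult_scalar[OF A w v(1)] v(1) unfolding w_def by simp
    then have "\<forall>i\<in>{0..<k}. w $ i * w $ i = 0"
      using w unfolding scalar_prod_def by (subst sum_nonneg_eq_0_iff[symmetric]) auto
    then have "w = 0\<^sub>v k" using w by (intro eq_vecI) auto
    then show False using inj[OF v(1)] v(2) unfolding w_def by simp
  qed
  then obtain B' where B': "B' \<in> carrier_mat n n" "B * B' = 1\<^sub>m n"
    using det_non_zero_imp_unit[OF B, of "()"] unfolding Units_def ring_mat_def by auto
  define x where "x = transpose_mat A *\<^sub>v (B' *\<^sub>v b)"
  have "A *\<^sub>v x = B *\<^sub>v (B' *\<^sub>v b)"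
    unfolding x_def B_def using A B' b
    by (metis assoc_mult_mat_vec mult_mat_vec_carrier transpose_carrier_mat)
  also have "\<dots> = b" using B B' b by (metis assoc_mult_mat_vec one_mult_mat_vec)
  finally show ?thesis unfolding x_def using A B' b by (intro bexI[of _ x]) (auto simp: x_def)
qed

lemma poly_span_if_no_annihilator:
  fixes g :: "'i \<Rightarrow> 'a :: linordered_field poly"
  assumes fin: "finite I" and deg: "\<And>i. i \<in> I \<Longrightarrow> degree (g i) \<le> d"
    and nondeg: "\<And>y. (\<forall>i\<in>I. (\<Sum>n\<le>d. y n * coeff (g i) n) = 0) \<Longrightarrow> \<forall>n\<le>d. y n = 0"
    and p: "degree p \<le> d"
  shows "\<exists>c. p = (\<Sum>i\<in>I. Polynomial.smult (c i) (g i))"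
proof -
  obtain e where e: "bij_betw e {0..<card I} I" using ex_bij_betw_nat_finite[OF fin] by blast
  define A :: "'a mat" where "A = mat (Suc d) (card I) (\<lambda>(n, k). coeff (g (e k)) n)"
  have A: "A \<in> carrier_mat (Suc d) (card I)" unfolding A_def by simp
  have "\<exists>x \<in> carrier_vec (card I). A *\<^sub>v x = vec (Suc d) (coeff p)"
  proof (rule mat_vec_surj_if_transpose_inj[OF A])
    fix v :: "'a vec" assume v: "v \<in> carrier_vec (Suc d)"
      and kernel: "transpose_mat A *\<^sub>v v = 0\<^sub>v (card I)"
    have "(transpose_mat A *\<^sub>v v) $ k = 0" if "k < card I" for k
      using kernel that by simp
    then have "\<forall>k<card I. (\<Sum>n<Suc d. coeff (g (e k)) n * v $ n) = 0"
      using A v by (simp add: A_def scalar_prod_def atLeast0LessThan)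
    then have "\<forall>i\<in>I. (\<Sum>n\<le>d. v $ n * coeff (g i) n) = 0"
      using e by (force simp: bij_betw_def lessThan_Suc_atMost mult.commute)
    then show "v = 0\<^sub>v (Suc d)" using nondeg v by (intro eq_vecI) auto
  qed simp
  then obtain x where x: "x \<in> carrier_vec (card I)" "A *\<^sub>v x = vec (Suc d) (coeff p)" by blast
  have coeff_eq: "coeff p n = (\<Sum>k<card I. x $ k * coeff (g (e k)) n)" for n
  proof (cases "n \<le> d")
    case True
    then have "coeff p n = (A *\<^sub>v x) $ n" using x(2) by simp
    then show ?thesis
      using True A x(1) by (simp add: A_def scalar_prod_def atLeast0LessThan mult.commute)
  next
    case False
    have "coeff (g (e k)) n = 0" if "k < card I" for k
      using deg[OF bij_betw_apply[OF e, of k]] that False by (intro coeff_eq_0) simp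
    then show ?thesis using p False by (simp add: coeff_eq_0)
  qed
  define c where "c i = x $ inv_into {0..<card I} e i" for i
  have "p = (\<Sum>k\<in>{0..<card I}. Polynomial.smult (x $ k) (g (e k)))"
    by (rule poly_eqI) (simp add: coeff_eq coeff_sum atLeast0LessThan)
  also have "\<dots> = (\<Sum>k\<in>{0..<card I}. Polynomial.smult (c (e k)) (g (e k)))"
    using e by (intro sum.cong) (simp_all add: c_def bij_betw_inv_into_left)
  also have "\<dots> = (\<Sum>i\<in>I. Polynomial.smult (c i) (g i))"
    by (rule sum.reindex_bij_betw[OF e])
  finally show ?thesis by blast
qed

lemma coeff_linear_power_full:
  "coeff ([:c, 1:] ^ k) n = (if n \<le> k then of_nat (k choose n) * c ^ (k - n) else 0)"
  for c :: "'a :: comm_ring_1"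
  by (auto simp: coeff_linear_poly_power coeff_eq_0 degree_linear_power)

lemma coeff_linear_power_shift:
  fixes a z :: "'a :: comm_ring_1"
  shows "coeff ([:-z, 1:] ^ d) n = (\<Sum>j\<le>d. of_nat (d choose j) * (a - z) ^ j * coeff ([:-a, 1:] ^ (d - j)) n)"
proof -
  have "[:-z, 1:] ^ d = ([:a - z:] + [:-a, 1:]) ^ d" by simp
  also have "\<dots> = (\<Sum>j\<le>d. of_nat (d choose j) * [:a - z:] ^ j * [:-a, 1:] ^ (d - j))"
    by (rule binomial_ring)
  also have "\<dots> = (\<Sum>j\<le>d. Polynomial.smult (of_nat (d choose j) * (a - z) ^ j) ([:-a, 1:] ^ (d - j)))"
  proof (rule sum.cong[OF refl])
    fix j
    have "[:a - z:] ^ j = [:(a - z) ^ j:]" by (induction j) (auto simp: algebra_simps)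
    then show "of_nat (d choose j) * [:a - z:] ^ j * [:-a, 1:] ^ (d - j) =
        Polynomial.smult (of_nat (d choose j) * (a - z) ^ j) ([:-a, 1:] ^ (d - j))"
      by (simp add: of_nat_poly mult.commute)
  qed
  finally show ?thesis by (simp add: coeff_sum)
qed

text \<open>The coefficient functional \<open>y\<close> pairs with \<open>(x - a)^(d-j)\<close> to the \<open>j\<close>-th Taylor
  coefficient at \<open>a\<close> of the polynomial below, up to the factor \<open>(d choose j) (-1)^j\<close>
  (apolarity).\<close>
definition apolar_poly :: "nat \<Rightarrow> (nat \<Rightarrow> real) \<Rightarrow> real poly" where
  "apolar_poly d y = (\<Sum>n\<le>d. monom (y n * of_nat (d choose n) * (-1) ^ (d - n)) (d - n))"

lemma coeff_apolar_poly:
  "coeff (apolar_poly d y) k = (if k \<le> d then y (d - k) * of_nat (d choose k) * (-1) ^ k else 0)"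
proof -
  have "coeff (apolar_poly d y) k =
      (\<Sum>n\<le>d. if d - n = k then y n * of_nat (d choose n) * (-1) ^ (d - n) else 0)"
    by (simp add: apolar_poly_def coeff_sum coeff_monom)
  also have "\<dots> = (\<Sum>n\<in>(if k \<le> d then {d - k} else {}). y n * of_nat (d choose n) * (-1) ^ (d - n))"
    by (rule sum.mono_neutral_cong_right) (auto split: if_splits)
  finally show ?thesis by (auto simp: binomial_symmetric[symmetric])
qed

lemma apolar_poly_taylor:
  "apolar_poly d y = (\<Sum>j\<le>d. Polynomial.smult (of_nat (d choose j) * (-1) ^ j *
      (\<Sum>n\<le>d. y n * coeff ([:-a, 1:] ^ (d - j)) n)) ([:-a, 1:] ^ j))"
proof (rule poly_ext)
  fix z
  have "poly (apolar_poly d y) z = (\<Sum>n\<le>d. y n * coeff ([:-z, 1:] ^ d) n)"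
    unfolding apolar_poly_def poly_sum poly_monom
    by (rule sum.cong) (auto simp: coeff_linear_power_full power_mult_distrib power_minus[of z])
  also have "\<dots> = (\<Sum>n\<le>d. \<Sum>j\<le>d. y n * (of_nat (d choose j) * (a - z) ^ j * coeff ([:-a, 1:] ^ (d - j)) n))"
    by (simp add: coeff_linear_power_shift[of z d _ a] sum_distrib_left)
  also have "\<dots> = (\<Sum>j\<le>d. of_nat (d choose j) * (a - z) ^ j * (\<Sum>n\<le>d. y n * coeff ([:-a, 1:] ^ (d - j)) n))"
    by (subst sum.swap) (simp add: sum_distrib_left mult_ac)
  also have "\<dots> = poly (\<Sum>j\<le>d. Polynomial.smult (of_nat (d choose j) * (-1) ^ j *
      (\<Sum>n\<le>d. y n * coeff ([:-a, 1:] ^ (d - j)) n)) ([:-a, 1:] ^ j)) z"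
    unfolding poly_sum by (rule sum.cong) (simp_all add: poly_power power_mult_distrib[symmetric] mult_ac)
  finally show "poly (apolar_poly d y) z = \<dots>" .
qed

lemma linear_power_dvd_apolar_poly:
  assumes "\<And>j. j < s \<Longrightarrow> (\<Sum>n\<le>d. y n * coeff ([:-a, 1:] ^ (d - j)) n) = 0"
  shows "[:-a, 1:] ^ s dvd apolar_poly d y"
  unfolding apolar_poly_taylor[of d y a]
proof (rule dvd_sum)
  fix j
  show "[:-a, 1:] ^ s dvd Polynomial.smult (of_nat (d choose j) * (-1) ^ j *
      (\<Sum>n\<le>d. y n * coeff ([:-a, 1:] ^ (d - j)) n)) ([:-a, 1:] ^ j)"
  proof (cases "j < s")
    case True
    then show ?thesis using assms by simp
  next
    case False
    then show ?thesis by (simp add: le_imp_power_dvd dvd_smult)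
  qed
qed

lemma degree_apolar_poly_le:
  assumes "\<And>j. j < s \<Longrightarrow> y j = 0" and "apolar_poly d y \<noteq> 0"
  shows "degree (apolar_poly d y) + s \<le> d"
proof -
  let ?k = "degree (apolar_poly d y)"
  have "coeff (apolar_poly d y) ?k \<noteq> 0" using assms(2) by simp
  then have "?k \<le> d" "y (d - ?k) \<noteq> 0" unfolding coeff_apolar_poly by (auto split: if_splits)
  then show ?thesis using assms(1)[of "d - ?k"] by linarith
qed

lemma apolar_poly_eq_0_imp:
  assumes "apolar_poly d y = 0" and "n \<le> d"
  shows "y n = 0"
proof -
  have "coeff (apolar_poly d y) (d - n) = 0" using assms(1) by simp
  then show ?thesis using assms(2) by (simp add: coeff_apolar_poly binomial_symmetric[symmetric])
qed

lemma card_mult_le_degree_if_power_dvd: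
  fixes p :: "'a :: idom poly"
  assumes "p \<noteq> 0" and "finite A" and dvd: "\<And>a. a \<in> A \<Longrightarrow> [:-a, 1:] ^ s dvd p"
  shows "s * card A \<le> degree p"
proof (cases "s = 0")
  case False
  have ord: "s \<le> order a p" if "a \<in> A" for a using dvd[OF that] assms(1) by (simp add: order_divides)
  then have "A \<subseteq> {x. poly p x = 0}" using False by (auto simp: order_root dest: ord)
  then have "(\<Sum>a\<in>A. order a p) \<le> (\<Sum>x | poly p x = 0. order x p)"
    using assms(1) by (intro sum_mono2 poly_roots_finite) auto
  moreover have "s * card A \<le> (\<Sum>a\<in>A. order a p)" using ord sum_mono[of A "\<lambda>_. s" "\<lambda>a. order a p"] by (simp add: mult.commute)
  ultimately show ?thesis using sum_order_le_degree[OF assms(1)] by linarith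
qed simp

text \<open>For a slope \<open>Some a\<close> this is \<open>(x - a)^(d-j)\<close>, for the vertical slope \<open>None\<close> it is
  \<open>x^j\<close>: the dehomogenisations of \<open>(U - a V)^(d-j) V^j\<close> and \<open>V^(d-j) U^j\<close>.\<close>
definition pencil_poly :: "nat \<Rightarrow> real option \<times> nat \<Rightarrow> real poly" where
  "pencil_poly d wj = (case wj of (Some a, j) \<Rightarrow> [:-a, 1:] ^ (d - j) | (None, j) \<Rightarrow> monom 1 j)"

lemma pencil_polys_span:
  fixes P :: "real option set"
  assumes fin: "finite P" and sd: "s \<le> d + 1" and count: "d + 1 \<le> s * card P"
    and p: "degree p \<le> d"
  shows "\<exists>c. p = (\<Sum>i\<in>P \<times> {..<s}. Polynomial.smult (c i) (pencil_poly d i))"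
proof (rule poly_span_if_no_annihilator[OF _ _ _ p])
  show "finite (P \<times> {..<s})" using fin by simp
  show "degree (pencil_poly d i) \<le> d" if "i \<in> P \<times> {..<s}" for i
    using that sd by (auto simp: pencil_poly_def degree_linear_power degree_monom_eq split: option.splits)
  fix y :: "nat \<Rightarrow> real"
  assume orth: "\<forall>i\<in>P \<times> {..<s}. (\<Sum>n\<le>d. y n * coeff (pencil_poly d i) n) = 0"
  define A where "A = {a. Some a \<in> P}"
  have finA: "finite A" unfolding A_def using fin by (metis finite_vimageI inj_Some vimage_def)
  have cardP: "card P = card A + (if None \<in> P then 1 else 0)"
  proof -
    have "P = Some ` A \<union> (P \<inter> {None})" unfolding A_def by (auto simp: image_iff) (metis not_None_eq)
    then show ?thesis using finA by (auto simp: card_image)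
  qed
  have "apolar_poly d y = 0"
  proof (rule ccontr)
    assume nz: "apolar_poly d y \<noteq> 0"
    have "[:-a, 1:] ^ s dvd apolar_poly d y" if "a \<in> A" for a
      using orth that by (intro linear_power_dvd_apolar_poly) (auto simp: A_def pencil_poly_def)
    then have sA: "s * card A \<le> degree (apolar_poly d y)"
      using card_mult_le_degree_if_power_dvd[OF nz finA] by blast
    have "degree (apolar_poly d y) \<le> d" using degree_apolar_poly_le[of 0 y d] nz by simp
    moreover have "degree (apolar_poly d y) + s \<le> d" if "None \<in> P"
    proof (rule degree_apolar_poly_le[OF _ nz])
      fix j assume "j < s"
      then have "(\<Sum>n\<le>d. y n * coeff (monom 1 j) n) = 0" using orth that by (auto simp: pencil_poly_def)
      moreover have "(\<Sum>n\<le>d. y n * coeff (monom 1 j) n) = y j"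
        using \<open>j < s\<close> sd by (simp add: coeff_monom mult.commute[of "y _"] if_distrib cong: if_cong)
      ultimately show "y j = 0" by simp
    qed
    ultimately show False using sA count cardP by (auto split: if_splits)
  qed
  then show "\<forall>n\<le>d. y n = 0" by (auto intro: apolar_poly_eq_0_imp)
qed

section \<open>Spaces of polynomials on the plane\<close>

definition fun_subspace :: "('a \<Rightarrow> real) set \<Rightarrow> bool" where
  "fun_subspace W \<longleftrightarrow> (\<lambda>z. 0) \<in> W \<and> (\<forall>p\<in>W. \<forall>q\<in>W. (\<lambda>z. p z + q z) \<in> W) \<and>
     (\<forall>p\<in>W. \<forall>c. (\<lambda>z. c * p z) \<in> W)"

lemma fun_subspace_zero: "fun_subspace W \<Longrightarrow> (\<lambda>z. 0) \<in> W"
  unfolding fun_subspace_def by blast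

lemma fun_subspace_add: "fun_subspace W \<Longrightarrow> p \<in> W \<Longrightarrow> q \<in> W \<Longrightarrow> (\<lambda>z. p z + q z) \<in> W"
  unfolding fun_subspace_def by blast

lemma fun_subspace_scale: "fun_subspace W \<Longrightarrow> p \<in> W \<Longrightarrow> (\<lambda>z. c * p z) \<in> W"
  unfolding fun_subspace_def by blast

lemma fun_subspace_diff: "fun_subspace W \<Longrightarrow> p \<in> W \<Longrightarrow> q \<in> W \<Longrightarrow> (\<lambda>z. p z - q z) \<in> W"
proof -
  assume W: "fun_subspace W" and "p \<in> W" "q \<in> W"
  then have "(\<lambda>z. p z + (- 1) * q z) \<in> W" by (intro fun_subspace_add fun_subspace_scale)
  then show "(\<lambda>z. p z - q z) \<in> W" by simp
qed

lemma fun_subspace_sum: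
  assumes "fun_subspace W" and "\<And>i. i \<in> S \<Longrightarrow> f i \<in> W"
  shows "(\<lambda>z. \<Sum>i\<in>S. f i z) \<in> W"
  using assms(2)
proof (induction S rule: infinite_finite_induct)
  case (insert x F)
  then show ?case using fun_subspace_add[OF assms(1)] by simp
qed (simp_all add: fun_subspace_zero[OF assms(1)])

lemma fun_mem_ext: "p \<in> W \<Longrightarrow> (\<And>z. q z = p z) \<Longrightarrow> q \<in> W"
proof -
  assume "p \<in> W" "\<And>z. q z = p z"
  then show "q \<in> W" by (metis ext)
qed

definition sum_space :: "'i set \<Rightarrow> ('i \<Rightarrow> ('a \<Rightarrow> real) set) \<Rightarrow> ('a \<Rightarrow> real) set" where
  "sum_space I W = {q. \<exists>f. (\<forall>i\<in>I. f i \<in> W i) \<and> q = (\<lambda>z. \<Sum>i\<in>I. f i z)}"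

lemma fun_subspace_sum_space:
  assumes W: "\<And>i. i \<in> I \<Longrightarrow> fun_subspace (W i)"
  shows "fun_subspace (sum_space I W)"
  unfolding fun_subspace_def
proof (intro conjI ballI allI)
  have "\<forall>i\<in>I. (\<lambda>z. 0) \<in> W i" using W by (simp add: fun_subspace_zero)
  then show "(\<lambda>z. 0) \<in> sum_space I W"
    unfolding sum_space_def by (intro CollectI exI[of _ "\<lambda>i z. 0"]) simp
next
  fix p q assume "p \<in> sum_space I W" "q \<in> sum_space I W"
  then obtain f g where f: "\<forall>i\<in>I. f i \<in> W i" "p = (\<lambda>z. \<Sum>i\<in>I. f i z)"
    and g: "\<forall>i\<in>I. g i \<in> W i" "q = (\<lambda>z. \<Sum>i\<in>I. g i z)"
    unfolding sum_space_def by blast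
  have "\<forall>i\<in>I. (\<lambda>z. f i z + g i z) \<in> W i" using f(1) g(1) by (simp add: W fun_subspace_add)
  then show "(\<lambda>z. p z + q z) \<in> sum_space I W"
    unfolding sum_space_def f(2) g(2) by (intro CollectI exI[of _ "\<lambda>i z. f i z + g i z"]) (simp add: sum.distrib)
next
  fix p c assume "p \<in> sum_space I W"
  then obtain f where f: "\<forall>i\<in>I. f i \<in> W i" "p = (\<lambda>z. \<Sum>i\<in>I. f i z)"
    unfolding sum_space_def by blast
  have "\<forall>i\<in>I. (\<lambda>z. c * f i z) \<in> W i" using f(1) by (simp add: W fun_subspace_scale)
  then show "(\<lambda>z. c * p z) \<in> sum_space I W"
    unfolding sum_space_def f(2) by (intro CollectI exI[of _ "\<lambda>i z. c * f i z"]) (simp add: sum_distrib_left)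
qed

lemma mem_sum_space:
  assumes "finite I" "i \<in> I" "q \<in> W i" and "\<And>j. j \<in> I \<Longrightarrow> (\<lambda>z. 0) \<in> W j"
  shows "q \<in> sum_space I W"
  unfolding sum_space_def
proof (intro CollectI exI[of _ "\<lambda>j. if j = i then q else (\<lambda>z. 0)"] conjI)
  show "\<forall>j\<in>I. (if j = i then q else (\<lambda>z. 0)) \<in> W j" using assms(3,4) by simp
  have "(\<Sum>j\<in>I. (if j = i then q else (\<lambda>z. 0)) z) = (\<Sum>j\<in>I. if j = i then q z else 0)" for z
    by (rule sum.cong) auto
  then show "q = (\<lambda>z. \<Sum>j\<in>I. (if j = i then q else (\<lambda>z. 0)) z)"
    using assms(1,2) by simp
qed

lemma sum_space_subset:
  assumes "fun_subspace V" and "\<And>i. i \<in> I \<Longrightarrow> W i \<subseteq> V"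
  shows "sum_space I W \<subseteq> V"
proof
  fix q assume "q \<in> sum_space I W"
  then obtain f where "\<forall>i\<in>I. f i \<in> W i" "q = (\<lambda>z. \<Sum>i\<in>I. f i z)"
    unfolding sum_space_def by blast
  then show "q \<in> V" using assms(2) by (auto intro: fun_subspace_sum[OF assms(1)])
qed

lemma sum_space_mono: "(\<And>i. i \<in> I \<Longrightarrow> W i \<subseteq> W' i) \<Longrightarrow> sum_space I W \<subseteq> sum_space I W'"
  unfolding sum_space_def by auto

lemma sum_space_cong: "(\<And>i. i \<in> I \<Longrightarrow> W i = W' i) \<Longrightarrow> sum_space I W = sum_space I W'"
  by (intro subset_antisym sum_space_mono) auto

lemma Pm_repr:
  assumes "p \<in> Pm m"
  obtains c where "\<And>z. p z = (\<Sum>i\<le>m. \<Sum>j\<le>m - i. c i j * fst z ^ i * snd z ^ j)"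
proof -
  from assms obtain c where c: "\<And>x y. p (x, y) = (\<Sum>i\<le>m. \<Sum>j\<le>m - i. c i j * x ^ i * y ^ j)"
    unfolding Pm_def by blast
  have "p z = (\<Sum>i\<le>m. \<Sum>j\<le>m - i. c i j * fst z ^ i * snd z ^ j)" for z
    using c[of "fst z" "snd z"] by simp
  then show ?thesis by (rule that)
qed

lemma fun_subspace_Pm: "fun_subspace (Pm m)"
  unfolding fun_subspace_def
proof (intro conjI ballI allI)
  show "(\<lambda>z. 0) \<in> Pm m" unfolding Pm_def by (intro CollectI exI[of _ "\<lambda>i j. 0"]) simp
next
  fix p q assume "p \<in> Pm m" "q \<in> Pm m"
  then obtain c d where "\<And>x y. p (x, y) = (\<Sum>i\<le>m. \<Sum>j\<le>m - i. c i j * x ^ i * y ^ j)"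
    "\<And>x y. q (x, y) = (\<Sum>i\<le>m. \<Sum>j\<le>m - i. d i j * x ^ i * y ^ j)"
    unfolding Pm_def by blast
  then show "(\<lambda>z. p z + q z) \<in> Pm m" unfolding Pm_def
    by (intro CollectI exI[of _ "\<lambda>i j. c i j + d i j"] allI) (simp add: algebra_simps sum.distrib)
next
  fix p a assume "p \<in> Pm m"
  then obtain c where "\<And>x y. p (x, y) = (\<Sum>i\<le>m. \<Sum>j\<le>m - i. c i j * x ^ i * y ^ j)"
    unfolding Pm_def by blast
  then show "(\<lambda>z. a * p z) \<in> Pm m" unfolding Pm_def
    by (intro CollectI exI[of _ "\<lambda>i j. a * c i j"] allI) (simp add: algebra_simps sum_distrib_left)
qed

lemma Pm_monomial:
  assumes "i + j \<le> m"
  shows "(\<lambda>z. fst z ^ i * snd z ^ j) \<in> Pm m"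
  unfolding Pm_def
proof (intro CollectI exI[of _ "\<lambda>i' j'. if i' = i \<and> j' = j then 1 else 0"] allI)
  fix x y :: real
  have "(\<Sum>j'\<le>m - i'. (if i' = i \<and> j' = j then 1 else 0) * x ^ i' * y ^ j') =
      (if i' = i then x ^ i * y ^ j else 0)" if "i' \<le> m" for i'
  proof (cases "i' = i")
    case True
    have "(\<Sum>j'\<le>m - i. (if j' = j then 1 else 0) * x ^ i * y ^ j') = x ^ i * y ^ j"
      using assms by (simp add: if_distrib[of "\<lambda>c. c * _"] cong: if_cong)
    then show ?thesis using True by simp
  qed simp
  then have "(\<Sum>i'\<le>m. \<Sum>j'\<le>m - i'. (if i' = i \<and> j' = j then 1 else 0) * x ^ i' * y ^ j') =
      (\<Sum>i'\<le>m. if i' = i then x ^ i * y ^ j else 0)" by (intro sum.cong) auto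
  also have "\<dots> = x ^ i * y ^ j" using assms by simp
  finally show "fst (x, y) ^ i * snd (x, y) ^ j =
      (\<Sum>i'\<le>m. \<Sum>j'\<le>m - i'. (if i' = i \<and> j' = j then 1 else 0) * x ^ i' * y ^ j')" by simp
qed

lemma Pm_mono:
  assumes "p \<in> Pm m" "m \<le> m'"
  shows "p \<in> Pm m'"
proof -
  obtain c where c: "\<And>z. p z = (\<Sum>i\<le>m. \<Sum>j\<le>m - i. c i j * fst z ^ i * snd z ^ j)"
    using Pm_repr[OF assms(1)] by blast
  have "(\<lambda>z. \<Sum>i\<le>m. \<Sum>j\<le>m - i. c i j * (fst z ^ i * snd z ^ j)) \<in> Pm m'"
    using assms(2) by (intro fun_subspace_sum[OF fun_subspace_Pm] fun_subspace_scale[OF fun_subspace_Pm]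
        Pm_monomial) auto
  then show ?thesis by (rule fun_mem_ext) (simp add: c mult.assoc)
qed

lemma Pm_const: "(\<lambda>z. a) \<in> Pm m"
  using fun_subspace_scale[OF fun_subspace_Pm Pm_monomial[of 0 0 m], of a] by simp

lemma Pm_mult:
  assumes "p \<in> Pm a" "q \<in> Pm b"
  shows "(\<lambda>z. p z * q z) \<in> Pm (a + b)"
proof -
  obtain c where c: "\<And>z. p z = (\<Sum>i\<le>a. \<Sum>j\<le>a - i. c i j * fst z ^ i * snd z ^ j)"
    using Pm_repr[OF assms(1)] by blast
  obtain d where d: "\<And>z. q z = (\<Sum>k\<le>b. \<Sum>l\<le>b - k. d k l * fst z ^ k * snd z ^ l)"
    using Pm_repr[OF assms(2)] by blast
  note Pm = fun_subspace_Pm[of "a + b"]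
  have "(\<lambda>z. \<Sum>i\<le>a. \<Sum>j\<le>a - i. \<Sum>k\<le>b. \<Sum>l\<le>b - k.
      (c i j * d k l) * (fst z ^ (i + k) * snd z ^ (j + l))) \<in> Pm (a + b)"
    by (intro fun_subspace_sum[OF Pm] fun_subspace_scale[OF Pm] Pm_monomial) auto
  then show ?thesis
  proof (rule fun_mem_ext)
    fix z
    show "p z * q z = (\<Sum>i\<le>a. \<Sum>j\<le>a - i. \<Sum>k\<le>b. \<Sum>l\<le>b - k.
        (c i j * d k l) * (fst z ^ (i + k) * snd z ^ (j + l)))"
    proof -
      have "p z * q z = (\<Sum>i\<le>a. \<Sum>j\<le>a - i. (c i j * fst z ^ i * snd z ^ j) * q z)"
        by (simp add: c sum_distrib_right)
      also have "\<dots> = (\<Sum>i\<le>a. \<Sum>j\<le>a - i. \<Sum>k\<le>b. \<Sum>l\<le>b - k.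
          (c i j * fst z ^ i * snd z ^ j) * (d k l * fst z ^ k * snd z ^ l))"
        by (simp only: d sum_distrib_left)
      also have "\<dots> = (\<Sum>i\<le>a. \<Sum>j\<le>a - i. \<Sum>k\<le>b. \<Sum>l\<le>b - k.
          (c i j * d k l) * (fst z ^ (i + k) * snd z ^ (j + l)))"
        by (intro sum.cong refl) (simp add: power_add mult_ac)
      finally show ?thesis .
    qed
  qed
qed

lemma Pm_power: "p \<in> Pm a \<Longrightarrow> (\<lambda>z. p z ^ k) \<in> Pm (a * k)"
proof (induction k)
  case 0
  then show ?case using Pm_const[of 1] by simp
next
  case (Suc k)
  then show ?case using Pm_mult[OF Suc.prems Suc.IH] by (simp add: algebra_simps)
qed

lemma poly_fun_iff_Pm: "poly_fun p \<longleftrightarrow> (\<exists>m. p \<in> Pm m)"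
proof
  assume "poly_fun p"
  then obtain c N where c: "\<And>x y. p (x, y) = (\<Sum>i\<le>N. \<Sum>j\<le>N. c i j * x ^ i * y ^ j)"
    unfolding poly_fun_def by blast
  note Pm = fun_subspace_Pm[of "N + N"]
  have "(\<lambda>z. \<Sum>i\<le>N. \<Sum>j\<le>N. c i j * (fst z ^ i * snd z ^ j)) \<in> Pm (N + N)"
    by (intro fun_subspace_sum[OF Pm] fun_subspace_scale[OF Pm] Pm_monomial) auto
  then have "p \<in> Pm (N + N)"
  proof (rule fun_mem_ext)
    fix z
    show "p z = (\<Sum>i\<le>N. \<Sum>j\<le>N. c i j * (fst z ^ i * snd z ^ j))"
      using c[of "fst z" "snd z"] by (simp add: mult.assoc)
  qed
  then show "\<exists>m. p \<in> Pm m" ..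
next
  assume "\<exists>m. p \<in> Pm m"
  then obtain m c where c: "\<And>x y. p (x, y) = (\<Sum>i\<le>m. \<Sum>j\<le>m - i. c i j * x ^ i * y ^ j)"
    unfolding Pm_def by blast
  show "poly_fun p" unfolding poly_fun_def
  proof (intro exI[of _ "\<lambda>i j. if j \<le> m - i then c i j else 0"] exI[of _ m] allI)
    fix x y :: real
    show "p (x, y) = (\<Sum>i\<le>m. \<Sum>j\<le>m. (if j \<le> m - i then c i j else 0) * x ^ i * y ^ j)"
    proof -
      have "(\<Sum>j\<le>m. (if j \<le> m - i then c i j else 0) * x ^ i * y ^ j) = (\<Sum>j\<le>m - i. c i j * x ^ i * y ^ j)"
        for i by (rule sum.mono_neutral_cong_right) auto
      then show ?thesis by (simp add: c)
    qed
  qed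
qed

section \<open>Barycentric coordinates and pencils of linear forms\<close>

definition affine_fun :: "(pt \<Rightarrow> real) \<Rightarrow> bool" where
  "affine_fun f \<longleftrightarrow> (\<exists>a b c. \<forall>z. f z = a + b * fst z + c * snd z)"

lemma affine_fun_Pm: "affine_fun f \<Longrightarrow> f \<in> Pm 1"
proof -
  assume "affine_fun f"
  then obtain a b c where f: "\<And>z. f z = a + b * fst z + c * snd z" unfolding affine_fun_def by blast
  note Pm = fun_subspace_Pm[of 1]
  have "(\<lambda>z. a + b * (fst z ^ 1 * snd z ^ 0) + c * (fst z ^ 0 * snd z ^ 1)) \<in> Pm 1"
    by (intro fun_subspace_add[OF Pm] fun_subspace_scale[OF Pm] Pm_const Pm_monomial) auto
  then show ?thesis by (rule fun_mem_ext) (simp add: f)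
qed

text \<open>\<open>bary a b c\<close> is the barycentric coordinate for the triangle \<open>abc\<close> that is \<open>1\<close> at \<open>a\<close>;
  the other two coordinates are \<open>bary b c a\<close> and \<open>bary c a b\<close>.\<close>
definition bary :: "pt \<Rightarrow> pt \<Rightarrow> pt \<Rightarrow> pt \<Rightarrow> real" where
  "bary a b c z = det2 (b - z) (c - z) / det2 (b - a) (c - a)"

lemma det2_cyclic:
  "det2 (c - b) (a - b) = det2 (b - a) (c - a)" "det2 (a - c) (b - c) = det2 (b - a) (c - a)"
  by (simp_all add: det2_def algebra_simps)

lemma affine_fun_bary: "affine_fun (bary a b c)"
  unfolding affine_fun_def
proof (intro exI allI)
  fix z
  define D where "D = det2 (b - a) (c - a)"
  show "bary a b c z = (fst b * snd c - snd b * fst c) / D + (- (snd c - snd b) / D) * fst z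
      + (- (fst b - fst c) / D) * snd z"
    unfolding bary_def D_def[symmetric]
    by (simp add: det2_def diff_divide_distrib add_divide_distrib algebra_simps)
qed

lemma bary_at_vertices:
  assumes "det2 (b - a) (c - a) \<noteq> 0"
  shows "bary a b c a = 1" "bary a b c b = 0" "bary a b c c = 0"
  using assms unfolding bary_def by (simp_all add: det2_def)

lemma affine_fun_bary_expand:
  assumes D: "det2 (b - a) (c - a) \<noteq> 0" and f: "affine_fun f"
  shows "f z = f a * bary a b c z + f b * bary b c a z + f c * bary c a b z"
proof -
  obtain p q r where f_eq: "\<And>z. f z = p + q * fst z + r * snd z"
    using f unfolding affine_fun_def by blast
  have "f a * det2 (b - z) (c - z) + f b * det2 (c - z) (a - z) + f c * det2 (a - z) (b - z)
      = f z * det2 (b - a) (c - a)"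
    unfolding f_eq det2_def by (simp add: algebra_simps)
  moreover have "f a * bary a b c z + f b * bary b c a z + f c * bary c a b z =
      (f a * det2 (b - z) (c - z) + f b * det2 (c - z) (a - z) + f c * det2 (a - z) (b - z))
        / det2 (b - a) (c - a)"
    by (simp add: bary_def det2_cyclic add_divide_distrib)
  ultimately show ?thesis using D by simp
qed

text \<open>Multiplying by an affine function \<open>L = L a \<lambda>\<^sub>a + L b \<lambda>\<^sub>b + L c \<lambda>\<^sub>c\<close> turns
  barycentric monomials of degree \<open>n\<close> into combinations of those of degree \<open>n + 1\<close>; starting
  from \<open>1\<close>, this reaches every monomial \<open>x^i y^j\<close>.\<close>
lemma Pm_subset_if_bary_monomials:
  assumes D: "det2 (b - a) (c - a) \<noteq> 0" and W: "fun_subspace W"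
    and mono: "\<And>i j k. i + j + k = m \<Longrightarrow>
      (\<lambda>z. bary a b c z ^ i * bary b c a z ^ j * bary c a b z ^ k) \<in> W"
  shows "Pm m \<subseteq> W"
proof
  let ?M = "\<lambda>i j k z. bary a b c z ^ i * bary b c a z ^ j * bary c a b z ^ k"
  define G where "G n = {p. \<forall>i j k. i + j + k + n = m \<longrightarrow> (\<lambda>z. p z * ?M i j k z) \<in> W}" for n
  have G_step: "(\<lambda>z. q z * L z) \<in> G (Suc n)" if q: "q \<in> G n" and L: "affine_fun L" for q L n
    unfolding G_def
  proof (intro CollectI allI impI)
    fix i j k assume ijk: "i + j + k + Suc n = m"
    have q': "(\<lambda>z. q z * ?M i' j' k' z) \<in> W" if "i' + j' + k' + n = m" for i' j' k'
      using q that unfolding G_def by blast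
    have "(\<lambda>z. L a * (q z * ?M (Suc i) j k z) + L b * (q z * ?M i (Suc j) k z)
        + L c * (q z * ?M i j (Suc k) z)) \<in> W"
      using ijk by (intro fun_subspace_add[OF W] fun_subspace_scale[OF W] q') simp_all
    then show "(\<lambda>z. q z * L z * ?M i j k z) \<in> W"
    proof (rule fun_mem_ext)
      fix z
      have "L z = L a * bary a b c z + L b * bary b c a z + L c * bary c a b z"
        by (rule affine_fun_bary_expand[OF D L])
      then show "q z * L z * ?M i j k z = L a * (q z * ?M (Suc i) j k z)
          + L b * (q z * ?M i (Suc j) k z) + L c * (q z * ?M i j (Suc k) z)"
        by (simp add: algebra_simps)
    qed
  qed
  have G_power: "(\<lambda>z. q z * L z ^ k) \<in> G (n + k)" if q: "q \<in> G n" and L: "affine_fun L" for q L n k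
  proof (induction k)
    case (Suc k)
    from G_step[OF Suc L] show ?case by (simp add: mult_ac)
  qed (use q in simp)
  have affine: "affine_fun (\<lambda>z. fst z)" "affine_fun (\<lambda>z. snd z)" "affine_fun (\<lambda>z. 1)"
    unfolding affine_fun_def by (metis add_0 mult_1 mult_zero_left add_0_right)+
  have "(\<lambda>z. 1) \<in> G 0" unfolding G_def using mono by simp
  then have "(\<lambda>z. 1 * fst z ^ i * snd z ^ j * 1 ^ (m - (i + j))) \<in> G (0 + i + j + (m - (i + j)))"
    for i j by (intro G_power affine)
  then have Gm: "(\<lambda>z. fst z ^ i * snd z ^ j) \<in> G m" if "i + j \<le> m" for i j
    using that by (metis (no_types, lifting) ext add.left_neutral le_add_diff_inverse mult_1 mult.right_neutral power_one)
  have monomial: "(\<lambda>z. fst z ^ i * snd z ^ j) \<in> W" if "i + j \<le> m" for i j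
    using Gm[OF that, unfolded G_def mem_Collect_eq, rule_format, of 0 0 0] by simp
  fix p assume "p \<in> Pm m"
  then obtain c where c: "\<And>z. p z = (\<Sum>i\<le>m. \<Sum>j\<le>m - i. c i j * fst z ^ i * snd z ^ j)"
    using Pm_repr by blast
  have "(\<lambda>z. \<Sum>i\<le>m. \<Sum>j\<le>m - i. c i j * (fst z ^ i * snd z ^ j)) \<in> W"
    by (intro fun_subspace_sum[OF W] fun_subspace_scale[OF W] monomial) auto
  then show "p \<in> W" by (rule fun_mem_ext) (simp add: c mult.assoc)
qed

definition homog :: "nat \<Rightarrow> real poly \<Rightarrow> (pt \<Rightarrow> real) \<Rightarrow> (pt \<Rightarrow> real) \<Rightarrow> pt \<Rightarrow> real" where
  "homog d p U V z = (\<Sum>n\<le>d. coeff p n * U z ^ n * V z ^ (d - n))"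

lemma homog_sum:
  "homog d (\<Sum>i\<in>I. Polynomial.smult (c i) (g i)) U V z = (\<Sum>i\<in>I. c i * homog d (g i) U V z)"
  unfolding homog_def coeff_sum
  by (simp add: sum_distrib_left sum_distrib_right mult_ac sum.swap[of _ I])

lemma homog_monom: "j \<le> d \<Longrightarrow> homog d (monom 1 j) U V z = U z ^ j * V z ^ (d - j)"
  unfolding homog_def by (simp add: coeff_monom if_distrib[of "\<lambda>c. c * _"] cong: if_cong)

lemma homog_linear_power:
  assumes "k \<le> d"
  shows "homog d ([:-\<alpha>, 1:] ^ k) U V z = (U z - \<alpha> * V z) ^ k * V z ^ (d - k)"
proof -
  have "homog d ([:-\<alpha>, 1:] ^ k) U V z =
      (\<Sum>n\<le>k. of_nat (k choose n) * (-\<alpha>) ^ (k - n) * U z ^ n * V z ^ (d - n))"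
    unfolding homog_def coeff_linear_power_full
    by (rule sum.mono_neutral_cong_right) (use assms in auto)
  also have "\<dots> = (\<Sum>n\<le>k. of_nat (k choose n) * U z ^ n * (- \<alpha> * V z) ^ (k - n)) * V z ^ (d - k)"
    unfolding sum_distrib_right
  proof (rule sum.cong[OF refl])
    fix n assume "n \<in> {..k}"
    then have "V z ^ (d - n) = V z ^ (k - n) * V z ^ (d - k)" using assms by (simp flip: power_add)
    then show "of_nat (k choose n) * (-\<alpha>) ^ (k - n) * U z ^ n * V z ^ (d - n) =
        of_nat (k choose n) * U z ^ n * (- \<alpha> * V z) ^ (k - n) * V z ^ (d - k)"
      by (simp add: power_mult_distrib[symmetric] mult_ac)
  qed
  also have "\<dots> = (U z - \<alpha> * V z) ^ k * V z ^ (d - k)"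
    using binomial_ring[of "U z" "- (\<alpha> * V z)" k] by simp
  finally show ?thesis .
qed

text \<open>The linear forms of the pencil spanned by \<open>U\<close> and \<open>V\<close>, indexed by the projective line:
  \<open>U - \<alpha> V\<close> for \<open>Some \<alpha>\<close> and \<open>V\<close> for \<open>None\<close>; the coform is a second form completing it
  to a basis.\<close>
definition pencil_form :: "(pt \<Rightarrow> real) \<Rightarrow> (pt \<Rightarrow> real) \<Rightarrow> real option \<Rightarrow> pt \<Rightarrow> real" where
  "pencil_form U V w z = (case w of Some \<alpha> \<Rightarrow> U z - \<alpha> * V z | None \<Rightarrow> V z)"

definition pencil_coform :: "(pt \<Rightarrow> real) \<Rightarrow> (pt \<Rightarrow> real) \<Rightarrow> real option \<Rightarrow> pt \<Rightarrow> real" where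
  "pencil_coform U V w z = (case w of Some _ \<Rightarrow> V z | None \<Rightarrow> U z)"

lemma homog_pencil_poly:
  assumes "j \<le> d"
  shows "homog d (pencil_poly d (w, j)) U V z = pencil_form U V w z ^ (d - j) * pencil_coform U V w z ^ j"
  using assms homog_monom[of j d U V z] homog_linear_power[of "d - j" d _ U V z]
  by (cases w) (simp_all add: pencil_poly_def pencil_form_def pencil_coform_def mult.commute)

lemma pencil_form_Pm: "U \<in> Pm 1 \<Longrightarrow> V \<in> Pm 1 \<Longrightarrow> pencil_form U V w \<in> Pm 1"
  unfolding pencil_form_def
  by (cases w) (auto intro: fun_subspace_diff[OF fun_subspace_Pm] fun_subspace_scale[OF fun_subspace_Pm])

lemma pencil_coform_Pm: "U \<in> Pm 1 \<Longrightarrow> V \<in> Pm 1 \<Longrightarrow> pencil_coform U V w \<in> Pm 1"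
  unfolding pencil_coform_def by (cases w) auto

text \<open>By \<open>pencil_polys_span\<close>, \<open>U^a V^(\<Omega>-a)\<close> is a combination of the forms
  \<open>pencil_form^(\<Omega>-j) pencil_coform^j\<close> with \<open>j < \<Omega> + 1 - R\<close>, each divisible by \<open>pencil_form^R\<close>.\<close>
lemma forms_in_subspace_if_pencil_powers:
  fixes P :: "real option set" and R \<Omega> m a :: nat
  assumes fin: "finite P" and R\<Omega>: "R \<le> \<Omega>" and \<Omega>m: "\<Omega> \<le> m"
    and count: "\<Omega> + 1 \<le> (\<Omega> + 1 - R) * card P" and a: "a \<le> \<Omega>"
    and W: "fun_subspace W" and U: "U \<in> Pm 1" and V: "V \<in> Pm 1" and M: "M \<in> Pm (m - \<Omega>)"
    and powers: "\<And>w G. w \<in> P \<Longrightarrow> G \<in> Pm (m - R) \<Longrightarrow> (\<lambda>z. pencil_form U V w z ^ R * G z) \<in> W"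
  shows "(\<lambda>z. U z ^ a * V z ^ (\<Omega> - a) * M z) \<in> W"
proof -
  define s where "s = \<Omega> + 1 - R"
  obtain c where c: "monom 1 a = (\<Sum>i\<in>P \<times> {..<s}. Polynomial.smult (c i) (pencil_poly \<Omega> i))"
    using pencil_polys_span[OF fin, of s \<Omega> "monom 1 a"] count a
    by (auto simp: s_def degree_monom_eq)
  have summand: "(\<lambda>z. c (w, j) * homog \<Omega> (pencil_poly \<Omega> (w, j)) U V z * M z) \<in> W"
    if w: "w \<in> P" and j: "j < s" for w j
  proof -
    have j\<Omega>: "j \<le> \<Omega>" "R \<le> \<Omega> - j" using j R\<Omega> unfolding s_def by auto
    define G where
      "G z = c (w, j) * (pencil_form U V w z ^ (\<Omega> - j - R) * pencil_coform U V w z ^ j * M z)" for z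
    have "(\<lambda>z. pencil_form U V w z ^ (\<Omega> - j - R) * pencil_coform U V w z ^ j * M z)
        \<in> Pm (1 * (\<Omega> - j - R) + 1 * j + (m - \<Omega>))"
      by (intro Pm_mult Pm_power pencil_form_Pm pencil_coform_Pm U V M)
    moreover have "1 * (\<Omega> - j - R) + 1 * j + (m - \<Omega>) = m - R" using j\<Omega> \<Omega>m by simp
    ultimately have "G \<in> Pm (m - R)" unfolding G_def by (simp add: fun_subspace_scale[OF fun_subspace_Pm])
    from powers[OF w this] show ?thesis
    proof (rule fun_mem_ext)
      fix z
      have "pencil_form U V w z ^ (\<Omega> - j) = pencil_form U V w z ^ R * pencil_form U V w z ^ (\<Omega> - j - R)"
        using j\<Omega> by (simp flip: power_add)
      then show "c (w, j) * homog \<Omega> (pencil_poly \<Omega> (w, j)) U V z * M z = pencil_form U V w z ^ R * G z"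
        unfolding G_def homog_pencil_poly[OF j\<Omega>(1)] by (simp add: mult_ac)
    qed
  qed
  have "(\<lambda>z. \<Sum>i\<in>P \<times> {..<s}. c i * homog \<Omega> (pencil_poly \<Omega> i) U V z * M z) \<in> W"
    by (rule fun_subspace_sum[OF W]) (use summand in auto)
  then show ?thesis
  proof (rule fun_mem_ext)
    fix z
    have "U z ^ a * V z ^ (\<Omega> - a) = homog \<Omega> (monom 1 a) U V z" using homog_monom[OF a] by simp
    also have "\<dots> = (\<Sum>i\<in>P \<times> {..<s}. c i * homog \<Omega> (pencil_poly \<Omega> i) U V z)"
      unfolding c homog_sum ..
    finally show "U z ^ a * V z ^ (\<Omega> - a) * M z =
        (\<Sum>i\<in>P \<times> {..<s}. c i * homog \<Omega> (pencil_poly \<Omega> i) U V z * M z)"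
      by (simp add: sum_distrib_right)
  qed
qed

lemma products_in_subspace_if_pencil_powers:
  fixes P :: "real option set" and R \<Omega> m a b :: nat
  assumes fin: "finite P" and R\<Omega>: "R \<le> \<Omega>" and count: "\<Omega> + 1 \<le> (\<Omega> + 1 - R) * card P"
    and ab: "\<Omega> \<le> a + b" "a + b \<le> m"
    and W: "fun_subspace W" and U: "U \<in> Pm 1" and V: "V \<in> Pm 1" and M: "M \<in> Pm (m - (a + b))"
    and powers: "\<And>w G. w \<in> P \<Longrightarrow> G \<in> Pm (m - R) \<Longrightarrow> (\<lambda>z. pencil_form U V w z ^ R * G z) \<in> W"
  shows "(\<lambda>z. U z ^ a * V z ^ b * M z) \<in> W"
proof -
  define a' where "a' = min a \<Omega>"
  have a': "a' \<le> \<Omega>" "a' \<le> a" "\<Omega> - a' \<le> b" using ab unfolding a'_def by auto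
  define M' where "M' z = U z ^ (a - a') * V z ^ (b - (\<Omega> - a')) * M z" for z
  have "M' \<in> Pm (1 * (a - a') + 1 * (b - (\<Omega> - a')) + (m - (a + b)))"
    unfolding M'_def by (intro Pm_mult Pm_power U V M)
  moreover have "1 * (a - a') + 1 * (b - (\<Omega> - a')) + (m - (a + b)) = m - \<Omega>" using a' ab by auto
  ultimately have "M' \<in> Pm (m - \<Omega>)" by simp
  moreover have "\<Omega> \<le> m" using ab by simp
  ultimately have "(\<lambda>z. U z ^ a' * V z ^ (\<Omega> - a') * M' z) \<in> W"
    using forms_in_subspace_if_pencil_powers[OF fin R\<Omega> _ count a'(1) W U V _ powers] by blast
  then show ?thesis
  proof (rule fun_mem_ext)
    fix z
    have "U z ^ a = U z ^ a' * U z ^ (a - a')" "V z ^ b = V z ^ (\<Omega> - a') * V z ^ (b - (\<Omega> - a'))"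
      using a' by (simp_all flip: power_add)
    then show "U z ^ a * V z ^ b * M z = U z ^ a' * V z ^ (\<Omega> - a') * M' z"
      unfolding M'_def by (simp add: mult_ac)
  qed
qed

section \<open>Edges and slopes\<close>

lemma lexless_total: "a \<noteq> b \<Longrightarrow> lexless a b \<or> lexless b a"
  unfolding lexless_def by (cases a; cases b) auto

lemma lexless_asym: "lexless a b \<Longrightarrow> \<not> lexless b a"
  unfolding lexless_def by auto

lemma lmin_lmax_pair: assumes "lexless a b" shows "lmin {a, b} = a" "lmax {a, b} = b"
proof -
  have ab: "a \<noteq> b" using assms unfolding lexless_def by auto
  have na: "\<not> lexless b a" using lexless_asym[OF assms] .
  show "lmin {a, b} = a" unfolding lmin_def
    apply (rule the_equality)
    using assms apply blast
    using na ab by auto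
  show "lmax {a, b} = b" unfolding lmax_def
    apply (rule the_equality)
    using assms apply blast
    using na ab by auto
qed

lemma card2_lmin_lmax: assumes "card \<tau> = 2"
  shows "\<tau> = {lmin \<tau>, lmax \<tau>}" "lmin \<tau> \<noteq> lmax \<tau>" "lexless (lmin \<tau>) (lmax \<tau>)"
proof -
  obtain a b where ab: "\<tau> = {a, b}" "a \<noteq> b" using assms by (auto simp: card_2_iff)
  have "(lexless a b \<and> lmin \<tau> = a \<and> lmax \<tau> = b) \<or> (lexless b a \<and> lmin \<tau> = b \<and> lmax \<tau> = a)"
  proof (cases "lexless a b")
    case True then show ?thesis using lmin_lmax_pair[OF True] ab(1) by simp
  next
    case False then have ba: "lexless b a" using lexless_total[OF ab(2)] by simp
    have "\<tau> = {b, a}" using ab(1) by (simp add: insert_commute)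
    then show ?thesis using lmin_lmax_pair[OF ba] ba by simp
  qed
  then have "\<tau> = {lmin \<tau>, lmax \<tau>} \<and> lmin \<tau> \<noteq> lmax \<tau> \<and> lexless (lmin \<tau>) (lmax \<tau>)"
    using ab by (elim disjE conjE) (simp_all add: insert_commute)
  then show "\<tau> = {lmin \<tau>, lmax \<tau>}" "lmin \<tau> \<noteq> lmax \<tau>" "lexless (lmin \<tau>) (lmax \<tau>)"
    by blast+
qed

lemma lmin_lmax_mem: assumes "card \<tau> = 2" shows "lmin \<tau> \<in> \<tau>" "lmax \<tau> \<in> \<tau>"
proof -
  have e: "{lmin \<tau>, lmax \<tau>} = \<tau>" using card2_lmin_lmax(1)[OF assms] by simp
  have "lmin \<tau> \<in> {lmin \<tau>, lmax \<tau>}" "lmax \<tau> \<in> {lmin \<tau>, lmax \<tau>}" by simp_all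
  with e show "lmin \<tau> \<in> \<tau>" "lmax \<tau> \<in> \<tau>" by simp_all
qed

lemma edge_vsign_notin: "card \<tau> = 2 \<Longrightarrow> \<gamma> \<notin> \<tau> \<Longrightarrow> edge_vsign \<tau> \<gamma> = 0"
proof -
  assume c: "card \<tau> = 2" and g: "\<gamma> \<notin> \<tau>"
  have "\<gamma> \<noteq> lmin \<tau>" "\<gamma> \<noteq> lmax \<tau>" using lmin_lmax_mem[OF c] g by auto
  then show ?thesis unfolding edge_vsign_def by simp
qed

lemma edge_vsign_square: "card \<tau> = 2 \<Longrightarrow> \<gamma> \<in> \<tau> \<Longrightarrow> edge_vsign \<tau> \<gamma> * edge_vsign \<tau> \<gamma> = 1"
  using card2_lmin_lmax[of \<tau>] unfolding edge_vsign_def by auto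

lemma det2_eq_0_iff_affine_hull:
  fixes p q z :: pt
  assumes "p \<noteq> q"
  shows "det2 (q - p) (z - p) = 0 \<longleftrightarrow> z \<in> affine hull {p, q}"
proof -
  obtain u1 u2 where u: "q - p = (u1, u2)" by (cases "q - p")
  obtain w1 w2 where w: "z - p = (w1, w2)" by (cases "z - p")
  have "q - p \<noteq> 0" using assms by simp
  then have "u1 \<noteq> 0 \<or> u2 \<noteq> 0" using u by (auto simp: zero_prod_def)
  have "det2 (q - p) (z - p) = 0 \<longleftrightarrow> (\<exists>t. z - p = t *\<^sub>R (q - p))"
  proof
    assume "det2 (q - p) (z - p) = 0"
    then have cross: "u1 * w2 = u2 * w1" by (simp add: det2_def u w)
    from \<open>u1 \<noteq> 0 \<or> u2 \<noteq> 0\<close> show "\<exists>t. z - p = t *\<^sub>R (q - p)"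
    proof
      assume "u1 \<noteq> 0"
      then show ?thesis using cross by (intro exI[of _ "w1 / u1"]) (simp add: u w field_simps)
    next
      assume "u2 \<noteq> 0"
      then show ?thesis using cross by (intro exI[of _ "w2 / u2"]) (simp add: u w field_simps)
    qed
  next
    assume "\<exists>t. z - p = t *\<^sub>R (q - p)"
    then obtain t where "w1 = t * u1" "w2 = t * u2" using u w by auto
    then show "det2 (q - p) (z - p) = 0" by (simp add: det2_def u w)
  qed
  also have "\<dots> \<longleftrightarrow> z \<in> affine hull {p, q}"
  proof -
    have "z - p = x \<longleftrightarrow> z = p + x" for x by (auto simp: algebra_simps)
    then show ?thesis unfolding affine_hull_2_alt by auto
  qed
  finally show ?thesis .
qed

lemma affine_fun_lform: "affine_fun (lform \<tau>)"
  unfolding affine_fun_def lform_def det2_def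
  by (intro exI[of _ "- fst (lmax \<tau> - lmin \<tau>) * snd (lmin \<tau>) + snd (lmax \<tau> - lmin \<tau>) * fst (lmin \<tau>)"]
      exI[of _ "- snd (lmax \<tau> - lmin \<tau>)"] exI[of _ "fst (lmax \<tau> - lmin \<tau>)"] allI) (simp add: algebra_simps)

lemma lform_eq_0_iff: "card \<tau> = 2 \<Longrightarrow> lform \<tau> z = 0 \<longleftrightarrow> z \<in> affine hull \<tau>"
  proof -
  assume two: "card \<tau> = 2"
  have "lform \<tau> z = 0 \<longleftrightarrow> z \<in> affine hull {lmin \<tau>, lmax \<tau>}"
    unfolding lform_def by (rule det2_eq_0_iff_affine_hull[OF card2_lmin_lmax(2)[OF two]])
  then show ?thesis using card2_lmin_lmax(1)[OF two] by simp
qed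

lemma lform_vanishes: "card \<tau> = 2 \<Longrightarrow> z \<in> \<tau> \<Longrightarrow> lform \<tau> z = 0"
  by (simp add: lform_eq_0_iff hull_inc)

lemma lform_nonzero:
  assumes "card \<tau> = 2"
  shows "\<exists>z. lform \<tau> z \<noteq> 0"
proof -
  define d where "d = lmax \<tau> - lmin \<tau>"
  have "d \<noteq> 0" unfolding d_def using card2_lmin_lmax(2)[OF assms] by simp
  then have "(fst d)\<^sup>2 + (snd d)\<^sup>2 \<noteq> 0" by (cases d) (auto simp: sum_power2_eq_zero_iff zero_prod_def)
  moreover have "lform \<tau> (lmin \<tau> + (- snd d, fst d)) = (fst d)\<^sup>2 + (snd d)\<^sup>2"
    unfolding lform_def d_def[symmetric] det2_def by (simp add: power2_eq_square)
  ultimately show ?thesis by metis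
qed

lemma det2_nonzero_if_affine_independent:
  assumes "\<not> affine_dependent {a, b, c}" "a \<noteq> b" "a \<noteq> c" "b \<noteq> c"
  shows "det2 (b - a) (c - a) \<noteq> 0"
proof
  assume "det2 (b - a) (c - a) = 0"
  then have "c \<in> affine hull ({a, b, c} - {c})"
    using det2_eq_0_iff_affine_hull[OF assms(2)] assms(3,4) by (simp add: insert_Diff_if)
  then show False using assms(1) unfolding affine_dependent_def by blast
qed

lemma finite_edges: "triangulation T \<Longrightarrow> finite (edges T)"
proof -
  assume "triangulation T"
  then have "finite T" "\<forall>\<sigma>\<in>T. card \<sigma> = 3" unfolding triangulation_def by auto
  then have "finite (\<Union>T)" by (intro finite_Union) (auto intro: card_ge_0_finite)
  moreover have "edges T \<subseteq> Pow (\<Union>T)" unfolding edges_def by auto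
  ultimately show ?thesis by (meson finite_Pow_iff finite_subset)
qed

lemma finite_int_edges: "triangulation T \<Longrightarrow> finite (int_edges T)"
  by (rule finite_subset[OF _ finite_edges]) (auto simp: int_edges_def)

lemma int_edge_if_int_vert: "\<tau> \<in> edges T \<Longrightarrow> v \<in> \<tau> \<Longrightarrow> v \<in> int_verts T \<Longrightarrow> \<tau> \<in> int_edges T"
  unfolding int_edges_def int_verts_def using hull_inc[of v \<tau>] by blast

lemma card2_subset_of_3:
  assumes "card \<tau> = 2" "\<tau> \<subseteq> {a, b, c}"
  shows "\<tau> = {c, a} \<or> \<tau> = {a, b} \<or> \<tau> = {b, c}"
proof -
  obtain x y where "\<tau> = {x, y}" "x \<noteq> y" using assms(1) by (auto simp: card_2_iff)
  then show ?thesis using assms(2) by (auto simp: insert_commute)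
qed

text \<open>The three edges are the three \<open>2\<close>-subsets of \<open>\<sigma>\<close>, so no vertex lies on all of them.\<close>
lemma triangle_edges:
  assumes \<sigma>: "card \<sigma> = 3" and sub: "\<tau>1 \<subseteq> \<sigma>" "\<tau>2 \<subseteq> \<sigma>" "\<tau>3 \<subseteq> \<sigma>"
    and two: "card \<tau>1 = 2" "card \<tau>2 = 2" "card \<tau>3 = 2"
    and ne: "\<tau>1 \<noteq> \<tau>2" "\<tau>2 \<noteq> \<tau>3" "\<tau>1 \<noteq> \<tau>3"
    and cap: "\<tau>1 \<inter> \<tau>2 = {\<gamma>1}" "\<tau>2 \<inter> \<tau>3 = {\<gamma>2}" "\<tau>3 \<inter> \<tau>1 = {\<gamma>3}"
  shows "\<gamma>1 \<noteq> \<gamma>2" "\<gamma>2 \<noteq> \<gamma>3" "\<gamma>1 \<noteq> \<gamma>3" "\<sigma> = {\<gamma>1, \<gamma>2, \<gamma>3}"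
    "\<tau>1 = {\<gamma>3, \<gamma>1}" "\<tau>2 = {\<gamma>1, \<gamma>2}" "\<tau>3 = {\<gamma>2, \<gamma>3}"
proof -
  obtain a b c where abc: "\<sigma> = {a, b, c}" "a \<noteq> b" "b \<noteq> c" "a \<noteq> c"
    using \<sigma> by (auto simp: card_3_iff)
  have no_common: False if "g \<in> \<tau>1" "g \<in> \<tau>2" "g \<in> \<tau>3" for g
    using card2_subset_of_3[OF two(1) sub(1)[unfolded abc(1)]]
      card2_subset_of_3[OF two(2) sub(2)[unfolded abc(1)]]
      card2_subset_of_3[OF two(3) sub(3)[unfolded abc(1)]] ne abc(2-4) that
    by auto
  have mem: "\<gamma>1 \<in> \<tau>1" "\<gamma>1 \<in> \<tau>2" "\<gamma>2 \<in> \<tau>2" "\<gamma>2 \<in> \<tau>3" "\<gamma>3 \<in> \<tau>3" "\<gamma>3 \<in> \<tau>1"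
    using cap by blast+
  show d: "\<gamma>1 \<noteq> \<gamma>2" "\<gamma>2 \<noteq> \<gamma>3" "\<gamma>1 \<noteq> \<gamma>3" using no_common mem by metis+
  have fin: "finite \<tau>1" "finite \<tau>2" "finite \<tau>3" "finite \<sigma>"
    using two \<sigma> by (auto intro: card_ge_0_finite)
  show "\<tau>1 = {\<gamma>3, \<gamma>1}" using card_subset_eq[OF fin(1), of "{\<gamma>3, \<gamma>1}"] mem d two by auto
  show "\<tau>2 = {\<gamma>1, \<gamma>2}" using card_subset_eq[OF fin(2), of "{\<gamma>1, \<gamma>2}"] mem d two by auto
  show "\<tau>3 = {\<gamma>2, \<gamma>3}" using card_subset_eq[OF fin(3), of "{\<gamma>2, \<gamma>3}"] mem d two by auto
  show "\<sigma> = {\<gamma>1, \<gamma>2, \<gamma>3}"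
    using card_subset_eq[OF fin(4), of "{\<gamma>1, \<gamma>2, \<gamma>3}"] mem sub d \<sigma> by auto
qed

lemma affine_fun_affine_comb:
  assumes "affine_fun f" "x + y + w = 1"
  shows "f (x *\<^sub>R p + y *\<^sub>R q + w *\<^sub>R s) = x * f p + y * f q + w * f s"
proof -
  obtain a b c where f: "\<And>z. f z = a + b * fst z + c * snd z"
    using assms(1) unfolding affine_fun_def by blast
  have "a = (x + y + w) * a" using assms(2) by simp
  then show ?thesis unfolding f by (simp add: algebra_simps)
qed

lemma bary_coordinates_surj:
  assumes D: "det2 (b - v) (c - v) \<noteq> 0"
  shows "\<exists>z. bary b c v z = x \<and> bary c v b z = y"
proof -
  have D': "det2 (c - b) (v - b) \<noteq> 0" "det2 (v - c) (b - c) \<noteq> 0" using D by (simp_all add: det2_cyclic)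
  let ?z = "(1 - x - y) *\<^sub>R v + x *\<^sub>R b + y *\<^sub>R c"
  have "bary b c v ?z = x" "bary c v b ?z = y"
    using affine_fun_affine_comb[OF affine_fun_bary, of "1 - x - y" x y] bary_at_vertices[OF D'(1)]
      bary_at_vertices[OF D'(2)] by simp_all
  then show ?thesis by blast
qed

text \<open>For an edge \<open>\<tau>\<close> through the vertex \<open>v\<close> of the triangle \<open>vbc\<close>, the point \<open>w\<close> of the
  projective line with \<open>lform \<tau>\<close> proportional to \<open>pencil_form U V w\<close>, where \<open>U = bary b c v\<close>
  and \<open>V = bary c v b\<close> (see \<open>lform_eq_pencil_form\<close>).\<close>
definition slope :: "pt \<Rightarrow> pt \<Rightarrow> pt set \<Rightarrow> real option" where
  "slope b c \<tau> = (if lform \<tau> b \<noteq> 0 then Some (- lform \<tau> c / lform \<tau> b) else None)"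

lemma lform_eq_pencil_form:
  assumes D: "det2 (b - v) (c - v) \<noteq> 0" and \<tau>: "card \<tau> = 2" "v \<in> \<tau>"
  shows "\<exists>\<kappa>. \<kappa> \<noteq> 0 \<and> (\<forall>z. lform \<tau> z = \<kappa> * pencil_form (bary b c v) (bary c v b) (slope b c \<tau>) z)"
proof -
  have D': "det2 (c - b) (v - b) \<noteq> 0" using D by (simp add: det2_cyclic)
  have expand: "lform \<tau> z = lform \<tau> b * bary b c v z + lform \<tau> c * bary c v b z" for z
    using affine_fun_bary_expand[OF D' affine_fun_lform, of \<tau> z] lform_vanishes[OF \<tau>] by simp
  show ?thesis
  proof (cases "lform \<tau> b = 0")
    case False
    have "lform \<tau> z = lform \<tau> b * pencil_form (bary b c v) (bary c v b) (slope b c \<tau>) z" for z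
      using False unfolding expand[of z] slope_def pencil_form_def by (simp add: field_simps)
    then show ?thesis using False by blast
  next
    case True
    then have eq: "lform \<tau> z = lform \<tau> c * pencil_form (bary b c v) (bary c v b) (slope b c \<tau>) z" for z
      unfolding expand[of z] slope_def pencil_form_def by simp
    obtain z where "lform \<tau> z \<noteq> 0" using lform_nonzero[OF \<tau>(1)] by blast
    then have "lform \<tau> c \<noteq> 0" using eq[of z] by auto
    then show ?thesis using eq by blast
  qed
qed

lemma pencil_form_zeros_determine:
  assumes D: "det2 (b - v) (c - v) \<noteq> 0"
    and zeros: "\<And>z. pencil_form (bary b c v) (bary c v b) w z = 0 \<longleftrightarrow>
      pencil_form (bary b c v) (bary c v b) w' z = 0"
  shows "w = w'"
proof -
  have vals: "pencil_form (bary b c v) (bary c v b) w z = 0 \<longleftrightarrow>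
      pencil_form (bary b c v) (bary c v b) w' z = 0"
    if "bary b c v z = x" "bary c v b z = y" for x y z using zeros .
  obtain z1 where z1: "bary b c v z1 = 1" "bary c v b z1 = 0" using bary_coordinates_surj[OF D] by blast
  show ?thesis
  proof (cases w; cases w')
    fix \<alpha> \<beta> assume w: "w = Some \<alpha>" and w': "w' = Some \<beta>"
    obtain z where "bary b c v z = \<alpha>" "bary c v b z = 1" using bary_coordinates_surj[OF D] by blast
    then show ?thesis using zeros[of z] w w' by (simp add: pencil_form_def)
  qed (use zeros[of z1] z1 in \<open>simp_all add: pencil_form_def\<close>)
qed

lemma slope_eq_iff:
  assumes D: "det2 (b - v) (c - v) \<noteq> 0"
    and \<tau>: "card \<tau> = 2" "v \<in> \<tau>" and \<tau>': "card \<tau>' = 2" "v \<in> \<tau>'"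
  shows "slope b c \<tau> = slope b c \<tau>' \<longleftrightarrow> affine hull \<tau> = affine hull \<tau>'"
proof -
  let ?L = "pencil_form (bary b c v) (bary c v b)"
  obtain \<kappa> where "\<kappa> \<noteq> 0" "\<And>z. lform \<tau> z = \<kappa> * ?L (slope b c \<tau>) z"
    using lform_eq_pencil_form[OF D \<tau>] by blast
  then have line: "z \<in> affine hull \<tau> \<longleftrightarrow> ?L (slope b c \<tau>) z = 0" for z
    using lform_eq_0_iff[OF \<tau>(1)] by simp
  obtain \<kappa>' where "\<kappa>' \<noteq> 0" "\<And>z. lform \<tau>' z = \<kappa>' * ?L (slope b c \<tau>') z"
    using lform_eq_pencil_form[OF D \<tau>'] by blast
  then have line': "z \<in> affine hull \<tau>' \<longleftrightarrow> ?L (slope b c \<tau>') z = 0" for z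
    using lform_eq_0_iff[OF \<tau>'(1)] by simp
  show ?thesis
  proof
    assume "affine hull \<tau> = affine hull \<tau>'"
    then show "slope b c \<tau> = slope b c \<tau>'"
      using line line' by (intro pencil_form_zeros_determine[OF D]) blast
  qed (use line line' in auto)
qed

lemma card_image_eq_if_same_fibres:
  assumes "\<And>x y. x \<in> E \<Longrightarrow> y \<in> E \<Longrightarrow> f x = f y \<longleftrightarrow> g x = g y"
  shows "card (f ` E) = card (g ` E)"
proof -
  define h where "h u = g (SOME x. x \<in> E \<and> f x = u)" for u
  have hf: "h (f x) = g x" if "x \<in> E" for x
  proof -
    have "(SOME y. y \<in> E \<and> f y = f x) \<in> E \<and> f (SOME y. y \<in> E \<and> f y = f x) = f x"
      by (rule someI[of _ x]) (use that in simp)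
    then show ?thesis unfolding h_def using assms that by blast
  qed
  have "inj_on h (f ` E)"
  proof (rule inj_onI)
    fix u u' assume "u \<in> f ` E" "u' \<in> f ` E" "h u = h u'"
    then obtain x x' where "x \<in> E" "x' \<in> E" "u = f x" "u' = f x'" "g x = g x'" using hf by auto
    then show "u = u'" using assms by blast
  qed
  moreover have "h ` (f ` E) = g ` E" using hf by (auto simp: image_iff)
  ultimately show ?thesis using card_image by fastforce
qed

lemma slopes_at_vertex:
  assumes tri: "triangulation T" and D: "det2 (b - v) (c - v) \<noteq> 0"
    and eb: "{v, b} \<in> edges T" and ec: "{v, c} \<in> edges T"
  shows "card (slope b c ` {\<tau> \<in> edges T. v \<in> \<tau>}) = nslopes T v" and "2 \<le> nslopes T v"
proof -
  let ?E = "{\<tau> \<in> edges T. v \<in> \<tau>}"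
  have two: "card \<tau> = 2" if "\<tau> \<in> ?E" for \<tau> using that unfolding edges_def by simp
  show card_eq: "card (slope b c ` ?E) = nslopes T v"
    unfolding nslopes_def by (rule card_image_eq_if_same_fibres) (use slope_eq_iff[OF D] two in auto)
  have vb: "card {v, b} = 2" and vc: "card {v, c} = 2" using eb ec unfolding edges_def by auto
  have D': "det2 (c - v) (b - v) \<noteq> 0" "det2 (v - c) (b - c) \<noteq> 0"
    using D by (simp_all add: det2_def algebra_simps)
  have "slope b c {v, b} = None" unfolding slope_def using lform_vanishes[OF vb] by simp
  moreover have "slope b c {v, c} \<noteq> None"
  proof
    assume None: "slope b c {v, c} = None"
    obtain \<kappa> where "\<kappa> \<noteq> 0" "\<And>z. lform {v, c} z = \<kappa> * bary c v b z"
      using lform_eq_pencil_form[OF D vc] None unfolding pencil_form_def by auto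
    moreover have "lform {v, c} c = 0" using lform_vanishes[OF vc] by simp
    ultimately show False using bary_at_vertices(1)[OF D'(2)] by simp
  qed
  ultimately have "card {slope b c {v, b}, slope b c {v, c}} = 2" by (simp add: eq_commute[of None])
  moreover have "{slope b c {v, b}, slope b c {v, c}} \<subseteq> slope b c ` ?E" using eb ec by auto
  moreover have "finite (slope b c ` ?E)" using finite_edges[OF tri] by simp
  ultimately show "2 \<le> nslopes T v" using card_eq card_mono by metis
qed

section \<open>The vertex ideals\<close>

definition Omega :: "int \<Rightarrow> nat \<Rightarrow> int" where
  "Omega r n = r + \<lceil>real_of_int (r + 1) / real_of_int (min (r + 2) (int n) - 1)\<rceil>"

lemma Omega_bounds:
  assumes "0 \<le> r" "2 \<le> n"
  shows "r + 1 \<le> Omega r n" "Omega r n + 1 \<le> (Omega r n - r) * int n"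
proof -
  define t where "t = min (r + 2) (int n)"
  define q where "q = \<lceil>real_of_int (r + 1) / real_of_int (t - 1)\<rceil>"
  have t: "2 \<le> t" "t \<le> int n" unfolding t_def using assms by auto
  have "real_of_int (r + 1) / real_of_int (t - 1) \<le> real_of_int q" unfolding q_def by linarith
  then have "real_of_int (r + 1) \<le> real_of_int (q * (t - 1))" using t by (simp add: divide_le_eq)
  then have qt: "r + 1 \<le> q * (t - 1)" by linarith
  then have q: "1 \<le> q" using assms(1) t by (smt (verit) mult_nonpos_nonneg)
  have Om: "Omega r n = r + q" unfolding Omega_def q_def t_def ..
  show "r + 1 \<le> Omega r n" using Om q by simp
  have "Omega r n + 1 = r + 1 + q" using Om by simp
  also have "\<dots> \<le> q * (t - 1) + q" using qt by simp
  also have "\<dots> = q * t" by (simp add: algebra_simps)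
  also have "\<dots> \<le> q * int n" using t q by simp
  also have "\<dots> = (Omega r n - r) * int n" using Om by simp
  finally show "Omega r n + 1 \<le> (Omega r n - r) * int n" .
qed

lemma int_less_of_real_half_less:
  fixes a :: int
  assumes "real_of_int (a - 3) / 2 < real m"
  shows "a < 2 * int m + 3"
proof -
  have "real_of_int (a - 3) < real_of_int (2 * int m)" using assms by simp
  then show ?thesis unfolding of_int_less_iff by linarith
qed

lemma J_vert_eq_sum_space: "J_vert T m rr \<gamma> = sum_space {\<tau> \<in> int_edges T. \<gamma> \<in> \<tau>} (J_edge m rr)"
  unfolding J_vert_def sum_space_def by auto

lemma J_edge_subset_Pm: "J_edge m rr \<tau> \<subseteq> Pm m"
  unfolding J_edge_def by auto

lemma J_edge_minus_one: "rr \<tau> = -1 \<Longrightarrow> J_edge m rr \<tau> = Pm m"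
  unfolding J_edge_def using poly_fun_iff_Pm by auto

lemma fun_subspace_J_edge: "fun_subspace (J_edge m rr \<tau>)"
  unfolding fun_subspace_def
proof (intro conjI ballI allI)
  have "poly_fun (\<lambda>z. 0)" using poly_fun_iff_Pm fun_subspace_zero[OF fun_subspace_Pm] by blast
  then show "(\<lambda>z. 0) \<in> J_edge m rr \<tau>"
    unfolding J_edge_def by (auto intro!: exI[of _ "\<lambda>z. 0"] fun_subspace_zero[OF fun_subspace_Pm])
next
  fix p q assume "p \<in> J_edge m rr \<tau>" "q \<in> J_edge m rr \<tau>"
  then obtain g h where g: "poly_fun g" "p = (\<lambda>z. g z * lform \<tau> z ^ nat (rr \<tau> + 1))" "p \<in> Pm m"
    and h: "poly_fun h" "q = (\<lambda>z. h z * lform \<tau> z ^ nat (rr \<tau> + 1))" "q \<in> Pm m"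
    unfolding J_edge_def by blast
  obtain a b where "g \<in> Pm a" "h \<in> Pm b" using g(1) h(1) poly_fun_iff_Pm by blast
  then have "poly_fun (\<lambda>z. g z + h z)" unfolding poly_fun_iff_Pm
    by (metis Pm_mono fun_subspace_Pm fun_subspace_add max.cobounded1 max.cobounded2)
  then show "(\<lambda>z. p z + q z) \<in> J_edge m rr \<tau>" unfolding J_edge_def
    using g h fun_subspace_add[OF fun_subspace_Pm] by (auto intro!: exI[of _ "\<lambda>z. g z + h z"] simp: algebra_simps)
next
  fix p c assume "p \<in> J_edge m rr \<tau>"
  then obtain g where g: "poly_fun g" "p = (\<lambda>z. g z * lform \<tau> z ^ nat (rr \<tau> + 1))" "p \<in> Pm m"
    unfolding J_edge_def by blast
  have "poly_fun (\<lambda>z. c * g z)" using g(1) fun_subspace_scale[OF fun_subspace_Pm] poly_fun_iff_Pm by blast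
  then show "(\<lambda>z. c * p z) \<in> J_edge m rr \<tau>" unfolding J_edge_def
    using g fun_subspace_scale[OF fun_subspace_Pm] by (auto intro!: exI[of _ "\<lambda>z. c * g z"] simp: algebra_simps)
qed

lemma J_edge_mono:
  assumes "rr \<tau> = s \<tau> \<or> s \<tau> = -1"
  shows "J_edge m rr \<tau> \<subseteq> J_edge m s \<tau>"
proof (cases "s \<tau> = -1")
  case True
  then show ?thesis using J_edge_subset_Pm J_edge_minus_one by metis
next
  case False
  then show ?thesis using assms unfolding J_edge_def by simp
qed

lemma lform_power_mult_in_J_edge:
  assumes G: "G \<in> Pm k" and deg: "k + nat (rr \<tau> + 1) \<le> m"
  shows "(\<lambda>z. lform \<tau> z ^ nat (rr \<tau> + 1) * G z) \<in> J_edge m rr \<tau>"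
proof -
  have "(\<lambda>z. lform \<tau> z ^ nat (rr \<tau> + 1) * G z) \<in> Pm (1 * nat (rr \<tau> + 1) + k)"
    by (intro Pm_mult Pm_power affine_fun_Pm[OF affine_fun_lform] G)
  then have "(\<lambda>z. lform \<tau> z ^ nat (rr \<tau> + 1) * G z) \<in> Pm m" using deg by (auto intro: Pm_mono)
  then show ?thesis unfolding J_edge_def using G poly_fun_iff_Pm
    by (auto intro!: exI[of _ G] simp: mult.commute)
qed

lemma fun_subspace_J_vert: "fun_subspace (J_vert T m rr \<gamma>)"
  unfolding J_vert_eq_sum_space by (intro fun_subspace_sum_space fun_subspace_J_edge)

lemma J_vert_subset_Pm: "J_vert T m rr \<gamma> \<subseteq> Pm m"
  unfolding J_vert_eq_sum_space by (intro sum_space_subset fun_subspace_Pm J_edge_subset_Pm)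

lemma J_edge_subset_J_vert:
  assumes "triangulation T" "\<tau> \<in> int_edges T" "\<gamma> \<in> \<tau>"
  shows "J_edge m rr \<tau> \<subseteq> J_vert T m rr \<gamma>"
  unfolding J_vert_eq_sum_space using assms finite_int_edges[OF assms(1)] fun_subspace_J_edge
  by (auto intro!: mem_sum_space fun_subspace_zero)

lemma J_vert_mono:
  "(\<And>\<tau>. \<tau> \<in> int_edges T \<Longrightarrow> \<gamma> \<in> \<tau> \<Longrightarrow> J_edge m rr \<tau> \<subseteq> J_edge m s \<tau>) \<Longrightarrow>
    J_vert T m rr \<gamma> \<subseteq> J_vert T m s \<gamma>"
  unfolding J_vert_eq_sum_space by (rule sum_space_mono) auto

lemma J_vert_cong:
  "(\<And>\<tau>. \<tau> \<in> int_edges T \<Longrightarrow> \<gamma> \<in> \<tau> \<Longrightarrow> rr \<tau> = s \<tau>) \<Longrightarrow> J_vert T m rr \<gamma> = J_vert T m s \<gamma>"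
  unfolding J_vert_eq_sum_space J_edge_def by (rule sum_space_cong) auto

lemma pencil_power_in_J_vert:
  assumes tri: "triangulation T" and D: "det2 (b - v) (c - v) \<noteq> 0"
    and \<tau>: "\<tau> \<in> edges T" "v \<in> \<tau>" and v: "v \<in> int_verts T" and r: "rr \<tau> = r" "0 \<le> r"
    and Rm: "nat (r + 1) \<le> m" and G: "G \<in> Pm (m - nat (r + 1))"
  shows "(\<lambda>z. pencil_form (bary b c v) (bary c v b) (slope b c \<tau>) z ^ nat (r + 1) * G z)
    \<in> J_vert T m rr v"
proof -
  let ?R = "nat (r + 1)"
  have two: "card \<tau> = 2" using \<tau>(1) unfolding edges_def by simp
  obtain \<kappa> where \<kappa>: "\<kappa> \<noteq> 0"
    "\<And>z. lform \<tau> z = \<kappa> * pencil_form (bary b c v) (bary c v b) (slope b c \<tau>) z"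
    using lform_eq_pencil_form[OF D two \<tau>(2)] by blast
  have "(\<lambda>z. lform \<tau> z ^ nat (rr \<tau> + 1) * (G z / \<kappa> ^ ?R)) \<in> J_edge m rr \<tau>"
    using Rm r by (intro lform_power_mult_in_J_edge[where k = "m - ?R"])
      (simp_all add: fun_subspace_scale[OF fun_subspace_Pm, of G _ "1 / \<kappa> ^ ?R", simplified, OF G])
  then have "(\<lambda>z. lform \<tau> z ^ nat (rr \<tau> + 1) * (G z / \<kappa> ^ ?R)) \<in> J_vert T m rr v"
    using J_edge_subset_J_vert[OF tri int_edge_if_int_vert[OF \<tau> v] \<tau>(2)] by blast
  then show ?thesis by (rule fun_mem_ext) (simp add: \<kappa>(2) r(1) \<kappa>(1) power_mult_distrib)
qed

text \<open>The edge forms through \<open>v\<close> are, up to scalars, the forms \<open>pencil_form U V w\<close> at the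
  \<open>nslopes T v\<close> slopes \<open>w\<close>, and \<open>Omega_bounds\<close> is the counting condition needed to apply
  \<open>products_in_subspace_if_pencil_powers\<close> with \<open>R = r + 1\<close>.\<close>
lemma bary_monomial_in_J_vert:
  assumes tri: "triangulation T" and D: "det2 (b - v) (c - v) \<noteq> 0"
    and eb: "{v, b} \<in> edges T" and ec: "{v, c} \<in> edges T" and v: "v \<in> int_verts T"
    and rv: "\<And>\<tau>. \<tau> \<in> int_edges T \<Longrightarrow> v \<in> \<tau> \<Longrightarrow> rr \<tau> = r" and r: "0 \<le> r"
    and high: "Omega r (nslopes T v) \<le> int (i + j)" and deg: "i + j + k = m"
  shows "(\<lambda>z. bary b c v z ^ i * bary c v b z ^ j * bary v b c z ^ k) \<in> J_vert T m rr v"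
proof -
  define P where "P = slope b c ` {\<tau> \<in> edges T. v \<in> \<tau>}"
  define R where "R = nat (r + 1)"
  define \<Omega> where "\<Omega> = nat (Omega r (nslopes T v))"
  have card: "card P = nslopes T v" "2 \<le> nslopes T v"
    unfolding P_def using slopes_at_vertex[OF tri D eb ec] by auto
  note bounds = Omega_bounds[OF r card(2)]
  have int: "int \<Omega> = Omega r (nslopes T v)" "int R = r + 1" using bounds r unfolding \<Omega>_def R_def by auto
  then have R\<Omega>: "R \<le> \<Omega>" using bounds(1) by linarith
  have "int (\<Omega> + 1) \<le> int ((\<Omega> + 1 - R) * card P)"
    using int R\<Omega> bounds(2) card(1) by (simp add: of_nat_diff)
  then have count: "\<Omega> + 1 \<le> (\<Omega> + 1 - R) * card P" by (simp only: of_nat_le_iff)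
  have "bary v b c \<in> Pm 1" by (rule affine_fun_Pm[OF affine_fun_bary])
  moreover have "m - (i + j) = 1 * k" using deg by simp
  ultimately have M: "(\<lambda>z. bary v b c z ^ k) \<in> Pm (m - (i + j))" using Pm_power by metis
  show ?thesis
  proof (rule products_in_subspace_if_pencil_powers[where P = P and R = R and \<Omega> = \<Omega>,
        OF _ R\<Omega> count _ _ fun_subspace_J_vert affine_fun_Pm[OF affine_fun_bary]
        affine_fun_Pm[OF affine_fun_bary] M])
    show "finite P" unfolding P_def using finite_edges[OF tri] by simp
    show "\<Omega> \<le> i + j" "i + j \<le> m" using high deg unfolding \<Omega>_def by auto
    fix w G assume "w \<in> P" and G: "G \<in> Pm (m - R)"
    then obtain \<tau> where \<tau>: "\<tau> \<in> edges T" "v \<in> \<tau>" "w = slope b c \<tau>" unfolding P_def by blast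
    have "nat (r + 1) \<le> m" "G \<in> Pm (m - nat (r + 1))"
      using R\<Omega> high deg G unfolding \<Omega>_def R_def by auto
    moreover have "rr \<tau> = r" using rv[OF int_edge_if_int_vert[OF \<tau>(1,2) v] \<tau>(2)] .
    ultimately show "(\<lambda>z. pencil_form (bary b c v) (bary c v b) w z ^ R * G z) \<in> J_vert T m rr v"
      unfolding \<tau>(3) R_def using pencil_power_in_J_vert[OF tri D \<tau>(1,2) v _ r] by blast
  qed
qed

lemma Pm_subset_sum_J_vert:
  assumes tri: "triangulation T" and D: "det2 (g2 - g1) (g3 - g1) \<noteq> 0"
    and edges: "{g1, g2} \<in> edges T" "{g2, g3} \<in> edges T" "{g3, g1} \<in> edges T"
    and int: "g1 \<in> int_verts T" "g2 \<in> int_verts T" "g3 \<in> int_verts T"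
    and rv: "\<And>\<gamma> \<tau>. \<gamma> \<in> {g1, g2, g3} \<Longrightarrow> \<tau> \<in> int_edges T \<Longrightarrow> \<gamma> \<in> \<tau> \<Longrightarrow> rr \<tau> = r"
    and r: "0 \<le> r"
    and bound: "Omega r (nslopes T g1) + Omega r (nslopes T g2) + Omega r (nslopes T g3) < 2 * int m + 3"
  shows "Pm m \<subseteq> sum_space {g1, g2, g3} (J_vert T m rr)"
proof (rule Pm_subset_if_bary_monomials[OF D])
  let ?W = "sum_space {g1, g2, g3} (J_vert T m rr)"
  show W: "fun_subspace ?W" by (intro fun_subspace_sum_space fun_subspace_J_vert)
  have in_W: "q \<in> ?W" if "g \<in> {g1, g2, g3}" "q \<in> J_vert T m rr g" for g q
    using that by (intro mem_sum_space fun_subspace_zero[OF fun_subspace_J_vert]) auto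
  have D2: "det2 (g3 - g2) (g1 - g2) \<noteq> 0" and D3: "det2 (g1 - g3) (g2 - g3) \<noteq> 0"
    using D by (simp_all add: det2_cyclic)
  have e: "{g1, g3} \<in> edges T" "{g2, g1} \<in> edges T" "{g3, g2} \<in> edges T"
    using edges by (simp_all add: insert_commute)
  have rv1: "rr \<tau> = r" if "\<tau> \<in> int_edges T" "g1 \<in> \<tau>" for \<tau> using rv[of g1 \<tau>] that by simp
  have rv2: "rr \<tau> = r" if "\<tau> \<in> int_edges T" "g2 \<in> \<tau>" for \<tau> using rv[of g2 \<tau>] that by simp
  have rv3: "rr \<tau> = r" if "\<tau> \<in> int_edges T" "g3 \<in> \<tau>" for \<tau> using rv[of g3 \<tau>] that by simp
  fix i j k assume ijk: "i + j + k = m"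
  let ?M = "\<lambda>z. bary g1 g2 g3 z ^ i * bary g2 g3 g1 z ^ j * bary g3 g1 g2 z ^ k"
  consider "Omega r (nslopes T g1) \<le> int (j + k)" | "Omega r (nslopes T g2) \<le> int (k + i)"
    | "Omega r (nslopes T g3) \<le> int (i + j)"
    using bound ijk by linarith
  then show "?M \<in> ?W"
  proof cases
    case 1
    have "(\<lambda>z. bary g2 g3 g1 z ^ j * bary g3 g1 g2 z ^ k * bary g1 g2 g3 z ^ i) \<in> J_vert T m rr g1"
      using 1 ijk by (intro bary_monomial_in_J_vert[OF tri D edges(1) e(1) int(1) rv1 r]) auto
    then show ?thesis by (intro in_W[of g1]) (auto elim: fun_mem_ext simp: mult_ac)
  next
    case 2
    have "(\<lambda>z. bary g3 g1 g2 z ^ k * bary g1 g2 g3 z ^ i * bary g2 g3 g1 z ^ j) \<in> J_vert T m rr g2"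
      using 2 ijk by (intro bary_monomial_in_J_vert[OF tri D2 edges(2) e(2) int(2) rv2 r]) auto
    then show ?thesis by (intro in_W[of g2]) (auto elim: fun_mem_ext simp: mult_ac)
  next
    case 3
    have "?M \<in> J_vert T m rr g3"
      using 3 ijk by (intro bary_monomial_in_J_vert[OF tri D3 edges(3) e(3) int(3) rv3 r]) auto
    then show ?thesis by (intro in_W[of g3]) auto
  qed
qed

section \<open>Homology\<close>

lemma bd1_Pm:
  assumes "\<And>\<tau>. \<tau> \<in> int_edges T \<Longrightarrow> f \<tau> \<in> Pm m"
  shows "bd1 T f \<gamma> \<in> Pm m"
  unfolding bd1_def
  by (intro fun_subspace_sum[OF fun_subspace_Pm] fun_subspace_scale[OF fun_subspace_Pm] assms)

lemma bd2_Pm: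
  assumes "\<And>\<sigma>. \<sigma> \<in> T \<Longrightarrow> h \<sigma> \<in> Pm m"
  shows "bd2 T h \<tau> \<in> Pm m"
  unfolding bd2_def
  by (intro fun_subspace_sum[OF fun_subspace_Pm] fun_subspace_scale[OF fun_subspace_Pm] assms)

lemma H0_vanishes_mono:
  assumes H0: "H0_vanishes T m rr"
    and sub: "\<And>\<gamma>. \<gamma> \<in> int_verts T \<Longrightarrow> J_vert T m rr \<gamma> \<subseteq> J_vert T m s \<gamma>"
  shows "H0_vanishes T m s"
  unfolding H0_vanishes_def
proof (intro allI impI)
  fix g assume "\<forall>\<gamma>\<in>int_verts T. g \<gamma> \<in> Pm m"
  then obtain f where "\<forall>\<tau>\<in>int_edges T. f \<tau> \<in> Pm m"
    "\<forall>\<gamma>\<in>int_verts T. (\<lambda>z. bd1 T f \<gamma> z - g \<gamma> z) \<in> J_vert T m rr \<gamma>"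
    using H0 unfolding H0_vanishes_def by blast
  then show "\<exists>f. (\<forall>\<tau>\<in>int_edges T. f \<tau> \<in> Pm m) \<and>
      (\<forall>\<gamma>\<in>int_verts T. (\<lambda>z. bd1 T f \<gamma> z - g \<gamma> z) \<in> J_vert T m s \<gamma>)"
    using sub by blast
qed

lemma pair_sum_at_vertex:
  fixes G :: "pt \<Rightarrow> pt \<Rightarrow> real"
  assumes "finite V" "x \<in> V"
  shows "(\<Sum>u\<in>V. \<Sum>w\<in>V - {u}. edge_vsign {u, w} x * (edge_vsign {u, w} u * G u w)) =
    (\<Sum>w\<in>V - {x}. G x w) + (\<Sum>u\<in>V - {x}. edge_vsign {u, x} x * edge_vsign {u, x} u * G u x)"
proof -
  have "(\<Sum>w\<in>V - {u}. edge_vsign {u, w} x * (edge_vsign {u, w} u * G u w)) =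
      edge_vsign {u, x} x * edge_vsign {u, x} u * G u x" if "u \<in> V - {x}" for u
  proof -
    have "edge_vsign {u, w} x = 0" if "w \<in> V - {u} - {x}" for w
      using that \<open>u \<in> V - {x}\<close> by (intro edge_vsign_notin) auto
    then show ?thesis using that assms by (subst sum.remove[of _ x]) auto
  qed
  moreover have "(\<Sum>w\<in>V - {x}. edge_vsign {x, w} x * (edge_vsign {x, w} x * G x w)) =
      (\<Sum>w\<in>V - {x}. G x w)"
  proof (rule sum.cong[OF refl])
    fix w assume "w \<in> V - {x}"
    then have "edge_vsign {x, w} x * edge_vsign {x, w} x = 1" by (intro edge_vsign_square) auto
    then show "edge_vsign {x, w} x * (edge_vsign {x, w} x * G x w) = G x w"
      by (simp add: mult.assoc[symmetric])
  qed
  ultimately show ?thesis using assms by (simp add: sum.remove[of V x])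
qed

lemma pair_sum_off_vertex:
  fixes F :: "pt \<Rightarrow> pt \<Rightarrow> real"
  assumes "x \<notin> V"
  shows "(\<Sum>u\<in>V. \<Sum>w\<in>V - {u}. edge_vsign {u, w} x * F u w) = 0"
proof (intro sum.neutral ballI)
  fix u w assume "u \<in> V" "w \<in> V - {u}"
  then have "edge_vsign {u, w} x = 0" using assms by (intro edge_vsign_notin) auto
  then show "edge_vsign {u, w} x * F u w = 0" by simp
qed

text \<open>For distinct \<open>u, w \<in> V\<close>, this moves the summand \<open>j u w\<close> (lying in \<open>J_vert\<close> at \<open>w\<close>) of
  \<open>\<partial>f(u)\<close> across the edge \<open>{u, w}\<close>, so that it reappears, up to sign, at \<open>w\<close>.\<close>
definition pair_correction :: "pt set \<Rightarrow> (pt \<Rightarrow> pt \<Rightarrow> pt \<Rightarrow> real) \<Rightarrow> pt set \<Rightarrow> pt \<Rightarrow> real" where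
  "pair_correction V j \<tau> z =
    (\<Sum>u\<in>V. \<Sum>w\<in>V - {u}. if \<tau> = {u, w} then edge_vsign {u, w} u * j u w z else 0)"

lemma pair_correction_Pm:
  assumes "\<And>u w. u \<in> V \<Longrightarrow> w \<in> V \<Longrightarrow> j u w \<in> Pm m"
  shows "pair_correction V j \<tau> \<in> Pm m"
proof -
  have "(\<lambda>z. if \<tau> = {u, w} then edge_vsign {u, w} u * j u w z else 0) \<in> Pm m"
    if "u \<in> V" "w \<in> V" for u w
  proof (cases "\<tau> = {u, w}")
    case True
    have "(\<lambda>z. edge_vsign {u, w} u * j u w z) \<in> Pm m"
      by (rule fun_subspace_scale[OF fun_subspace_Pm assms[OF that]])
    then show ?thesis using True by simp
  qed (simp add: fun_subspace_zero[OF fun_subspace_Pm])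
  then show ?thesis
    unfolding pair_correction_def[abs_def] by (intro fun_subspace_sum[OF fun_subspace_Pm]) auto
qed

lemma pair_correction_eq_0:
  assumes "\<not> \<tau> \<subseteq> V"
  shows "pair_correction V j \<tau> z = 0"
  unfolding pair_correction_def
proof (intro sum.neutral ballI)
  fix u w assume "u \<in> V" "w \<in> V - {u}"
  then have "\<tau> \<noteq> {u, w}" using assms by blast
  then show "(if \<tau> = {u, w} then edge_vsign {u, w} u * j u w z else 0) = 0" by simp
qed

lemma bd1_minus_pair_correction:
  assumes fin: "finite (int_edges T)"
    and adj: "\<And>u w. u \<in> V \<Longrightarrow> w \<in> V \<Longrightarrow> u \<noteq> w \<Longrightarrow> {u, w} \<in> int_edges T"
  shows "bd1 T (\<lambda>\<tau> z. f \<tau> z - pair_correction V j \<tau> z) \<gamma> z =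
    bd1 T f \<gamma> z - (\<Sum>u\<in>V. \<Sum>w\<in>V - {u}. edge_vsign {u, w} \<gamma> * (edge_vsign {u, w} u * j u w z))"
proof -
  let ?F = "\<lambda>u w. edge_vsign {u, w} u * j u w z"
  have "(\<Sum>\<tau>\<in>int_edges T. edge_vsign \<tau> \<gamma> * pair_correction V j \<tau> z) =
      (\<Sum>\<tau>\<in>int_edges T. \<Sum>u\<in>V. \<Sum>w\<in>V - {u}. if \<tau> = {u, w} then edge_vsign {u, w} \<gamma> * ?F u w else 0)"
    unfolding pair_correction_def sum_distrib_left by (intro sum.cong refl) simp
  also have "\<dots> = (\<Sum>u\<in>V. \<Sum>w\<in>V - {u}. \<Sum>\<tau>\<in>int_edges T.
      if \<tau> = {u, w} then edge_vsign {u, w} \<gamma> * ?F u w else 0)"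
    by (rule trans[OF sum.swap]) (intro sum.cong refl sum.swap)
  also have "\<dots> = (\<Sum>u\<in>V. \<Sum>w\<in>V - {u}. edge_vsign {u, w} \<gamma> * ?F u w)"
  proof (intro sum.cong refl)
    fix u w assume "u \<in> V" "w \<in> V - {u}"
    then have "{u, w} \<in> int_edges T" using adj[of u w] by blast
    then show "(\<Sum>\<tau>\<in>int_edges T. if \<tau> = {u, w} then edge_vsign {u, w} \<gamma> * ?F u w else 0) =
        edge_vsign {u, w} \<gamma> * ?F u w"
      using fin by (simp add: sum.delta)
  qed
  finally show ?thesis
    unfolding bd1_def by (simp add: right_diff_distrib sum_subtractf)
qed

text \<open>At \<open>x \<in> V\<close> the correction removes the summands \<open>j x w\<close>, \<open>w \<noteq> x\<close>, of \<open>\<partial>f(x)\<close> and adds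
  multiples of the \<open>j u x\<close>, all in \<open>J_vert\<close> at \<open>x\<close>; away from \<open>V\<close> nothing changes.\<close>
lemma bd1_minus_pair_correction_in_J_vert:
  assumes tri: "triangulation T" and fin: "finite V"
    and adj: "\<And>u w. u \<in> V \<Longrightarrow> w \<in> V \<Longrightarrow> u \<noteq> w \<Longrightarrow> {u, w} \<in> int_edges T"
    and j: "\<And>u w. u \<in> V \<Longrightarrow> w \<in> V \<Longrightarrow> j u w \<in> J_vert T m rr w"
    and bd_j: "\<And>u. u \<in> V \<Longrightarrow> bd1 T f u = (\<lambda>z. \<Sum>w\<in>V. j u w z)"
    and off: "\<gamma> \<notin> V \<Longrightarrow> bd1 T f \<gamma> \<in> J_vert T m rr \<gamma>"
  shows "bd1 T (\<lambda>\<tau> z. f \<tau> z - pair_correction V j \<tau> z) \<gamma> \<in> J_vert T m rr \<gamma>"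
proof -
  have bd: "bd1 T (\<lambda>\<tau> z. f \<tau> z - pair_correction V j \<tau> z) \<gamma> z = bd1 T f \<gamma> z -
      (\<Sum>u\<in>V. \<Sum>w\<in>V - {u}. edge_vsign {u, w} \<gamma> * (edge_vsign {u, w} u * j u w z))" for z
    by (rule bd1_minus_pair_correction[OF finite_int_edges[OF tri] adj])
  show ?thesis
  proof (cases "\<gamma> \<in> V")
    case True
    let ?c = "\<lambda>u. - (edge_vsign {u, \<gamma>} \<gamma> * edge_vsign {u, \<gamma>} u)"
    have "(\<lambda>z. j \<gamma> \<gamma> z + (\<Sum>u\<in>V - {\<gamma>}. ?c u * j u \<gamma> z)) \<in> J_vert T m rr \<gamma>"
      using True j by (intro fun_subspace_add[OF fun_subspace_J_vert] fun_subspace_sum[OF fun_subspace_J_vert]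
          fun_subspace_scale[OF fun_subspace_J_vert]) auto
    then show ?thesis
    proof (rule fun_mem_ext)
      fix z
      show "bd1 T (\<lambda>\<tau> z. f \<tau> z - pair_correction V j \<tau> z) \<gamma> z =
          j \<gamma> \<gamma> z + (\<Sum>u\<in>V - {\<gamma>}. ?c u * j u \<gamma> z)"
        unfolding bd pair_sum_at_vertex[OF fin True] bd_j[OF True]
        using fin True by (simp add: sum.remove[of V \<gamma>] sum_negf algebra_simps)
    qed
  next
    case False
    have "bd1 T (\<lambda>\<tau> z. f \<tau> z - pair_correction V j \<tau> z) \<gamma> = bd1 T f \<gamma>"
    proof
      fix z
      show "bd1 T (\<lambda>\<tau> z. f \<tau> z - pair_correction V j \<tau> z) \<gamma> z = bd1 T f \<gamma> z"
        unfolding bd pair_sum_off_vertex[OF False] by simp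
    qed
    then show ?thesis using off[OF False] by simp
  qed
qed

text \<open>If \<open>P\<^sub>m\<close> is the sum of the vertex spaces at a set \<open>V\<close> of pairwise adjacent vertices, a cycle
  for \<open>s\<close> (no smoothness on the edges inside \<open>V\<close>) becomes a cycle for \<open>rr\<close> after the pair
  correction, and \<open>H\<^sub>1(Q\<^sup>r\<^sup>r) = 0\<close> then bounds it.\<close>
lemma H1_vanishes_relax:
  assumes tri: "triangulation T" and H1: "H1_vanishes T m rr"
    and fin: "finite V" and adj: "\<And>u w. u \<in> V \<Longrightarrow> w \<in> V \<Longrightarrow> u \<noteq> w \<Longrightarrow> {u, w} \<in> int_edges T"
    and split: "Pm m \<subseteq> sum_space V (J_vert T m rr)"
    and s_in: "\<And>\<tau>. \<tau> \<in> int_edges T \<Longrightarrow> \<tau> \<subseteq> V \<Longrightarrow> s \<tau> = -1"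
    and s_out: "\<And>\<tau>. \<tau> \<in> int_edges T \<Longrightarrow> \<not> \<tau> \<subseteq> V \<Longrightarrow> s \<tau> = rr \<tau>"
  shows "H1_vanishes T m s"
  unfolding H1_vanishes_def
proof (intro allI impI, elim conjE)
  fix f assume fP: "\<forall>\<tau>\<in>int_edges T. f \<tau> \<in> Pm m"
    and cycle: "\<forall>\<gamma>\<in>int_verts T. bd1 T f \<gamma> \<in> J_vert T m s \<gamma>"
  have "\<forall>u\<in>V. \<exists>g. (\<forall>w\<in>V. g w \<in> J_vert T m rr w) \<and> bd1 T f u = (\<lambda>z. \<Sum>w\<in>V. g w z)"
    using split bd1_Pm[of T f m] fP unfolding sum_space_def by blast
  then obtain j where j: "\<And>u w. u \<in> V \<Longrightarrow> w \<in> V \<Longrightarrow> j u w \<in> J_vert T m rr w"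
    and bd_j: "\<And>u. u \<in> V \<Longrightarrow> bd1 T f u = (\<lambda>z. \<Sum>w\<in>V. j u w z)"
    by metis
  let ?f' = "\<lambda>\<tau> z. f \<tau> z - pair_correction V j \<tau> z"
  have "bd1 T ?f' \<gamma> \<in> J_vert T m rr \<gamma>" if "\<gamma> \<in> int_verts T" for \<gamma>
  proof (rule bd1_minus_pair_correction_in_J_vert[OF tri fin adj j bd_j])
    assume "\<gamma> \<notin> V"
    then have "J_vert T m s \<gamma> = J_vert T m rr \<gamma>" using s_out by (intro J_vert_cong) auto
    then show "bd1 T f \<gamma> \<in> J_vert T m rr \<gamma>" using cycle that by auto
  qed
  moreover have "?f' \<tau> \<in> Pm m" if "\<tau> \<in> int_edges T" for \<tau>
  proof (rule fun_subspace_diff[OF fun_subspace_Pm])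
    show "f \<tau> \<in> Pm m" using fP that by blast
    show "pair_correction V j \<tau> \<in> Pm m" by (rule pair_correction_Pm) (use j J_vert_subset_Pm in blast)
  qed
  ultimately obtain h where h: "\<forall>\<sigma>\<in>T. h \<sigma> \<in> Pm m"
    "\<forall>\<tau>\<in>int_edges T. (\<lambda>z. ?f' \<tau> z - bd2 T h \<tau> z) \<in> J_edge m rr \<tau>"
    using H1[unfolded H1_vanishes_def, THEN spec[of _ ?f']] by blast
  have "(\<lambda>z. f \<tau> z - bd2 T h \<tau> z) \<in> J_edge m s \<tau>" if \<tau>: "\<tau> \<in> int_edges T" for \<tau>
  proof (cases "\<tau> \<subseteq> V")
    case True
    then show ?thesis
      using \<tau> fP h(1) s_in by (simp add: J_edge_minus_one fun_subspace_diff[OF fun_subspace_Pm] bd2_Pm)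
  next
    case False
    have "J_edge m s \<tau> = J_edge m rr \<tau>" unfolding J_edge_def using s_out[OF \<tau> False] by simp
    then show ?thesis using bspec[OF h(2) \<tau>] by (simp add: pair_correction_eq_0[OF False])
  qed
  then show "\<exists>h. (\<forall>\<sigma>\<in>T. h \<sigma> \<in> Pm m) \<and> (\<forall>\<tau>\<in>int_edges T. (\<lambda>z. f \<tau> z - bd2 T h \<tau> z) \<in> J_edge m s \<tau>)"
    using h(1) by blast
qed

lemma interior_face:
  assumes tri: "triangulation T" and face: "\<sigma> \<in> T"
    and edges_of_face: "\<tau>1 \<subseteq> \<sigma>" "\<tau>2 \<subseteq> \<sigma>" "\<tau>3 \<subseteq> \<sigma>"
      "card \<tau>1 = 2" "card \<tau>2 = 2" "card \<tau>3 = 2" "\<tau>1 \<noteq> \<tau>2" "\<tau>2 \<noteq> \<tau>3" "\<tau>1 \<noteq> \<tau>3"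
    and verts: "\<tau>1 \<inter> \<tau>2 = {\<gamma>1}" "\<tau>2 \<inter> \<tau>3 = {\<gamma>2}" "\<tau>3 \<inter> \<tau>1 = {\<gamma>3}"
    and interior: "\<gamma>1 \<in> int_verts T" "\<gamma>2 \<in> int_verts T"
  shows "det2 (\<gamma>2 - \<gamma>1) (\<gamma>3 - \<gamma>1) \<noteq> 0" and "\<sigma> = {\<gamma>1, \<gamma>2, \<gamma>3}"
    and "\<tau>1 = {\<gamma>3, \<gamma>1}" "\<tau>2 = {\<gamma>1, \<gamma>2}" "\<tau>3 = {\<gamma>2, \<gamma>3}"
    and "{\<gamma>1, \<gamma>2} \<in> edges T" "{\<gamma>2, \<gamma>3} \<in> edges T" "{\<gamma>3, \<gamma>1} \<in> edges T"
    and "{\<tau>1, \<tau>2, \<tau>3} \<subseteq> int_edges T"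
    and "\<And>\<tau>. \<tau> \<in> edges T \<Longrightarrow> \<tau> \<subseteq> \<sigma> \<Longrightarrow> \<tau> \<in> {\<tau>1, \<tau>2, \<tau>3}"
    and "\<And>u w. u \<in> \<sigma> \<Longrightarrow> w \<in> \<sigma> \<Longrightarrow> u \<noteq> w \<Longrightarrow> {u, w} \<in> int_edges T"
proof -
  have \<sigma>: "card \<sigma> = 3" "\<not> affine_dependent \<sigma>" using tri face unfolding triangulation_def by auto
  note tr = triangle_edges[OF \<sigma>(1) edges_of_face verts]
  show "det2 (\<gamma>2 - \<gamma>1) (\<gamma>3 - \<gamma>1) \<noteq> 0"
    using det2_nonzero_if_affine_independent[OF _ tr(1) tr(3) tr(2)] \<sigma>(2) tr(4) by simp
  show \<sigma>_eq: "\<sigma> = {\<gamma>1, \<gamma>2, \<gamma>3}" using tr(4) .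
  show \<tau>: "\<tau>1 = {\<gamma>3, \<gamma>1}" "\<tau>2 = {\<gamma>1, \<gamma>2}" "\<tau>3 = {\<gamma>2, \<gamma>3}" using tr(5-7) .
  have edges: "\<tau>1 \<in> edges T" "\<tau>2 \<in> edges T" "\<tau>3 \<in> edges T"
    unfolding edges_def using edges_of_face face by auto
  then show "{\<gamma>1, \<gamma>2} \<in> edges T" "{\<gamma>2, \<gamma>3} \<in> edges T" "{\<gamma>3, \<gamma>1} \<in> edges T"
    unfolding \<tau> by simp_all
  have "\<tau>1 \<in> int_edges T" by (rule int_edge_if_int_vert[OF edges(1) _ interior(1)]) (simp add: \<tau>)
  moreover have "\<tau>2 \<in> int_edges T" by (rule int_edge_if_int_vert[OF edges(2) _ interior(1)]) (simp add: \<tau>)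
  moreover have "\<tau>3 \<in> int_edges T" by (rule int_edge_if_int_vert[OF edges(3) _ interior(2)]) (simp add: \<tau>)
  ultimately show int: "{\<tau>1, \<tau>2, \<tau>3} \<subseteq> int_edges T" by simp
  show face_edge: "\<tau> \<in> {\<tau>1, \<tau>2, \<tau>3}" if "\<tau> \<in> edges T" "\<tau> \<subseteq> \<sigma>" for \<tau>
    using card2_subset_of_3[of \<tau> \<gamma>1 \<gamma>2 \<gamma>3] that \<tau> \<sigma>_eq unfolding edges_def by auto
  show "{u, w} \<in> int_edges T" if "u \<in> \<sigma>" "w \<in> \<sigma>" "u \<noteq> w" for u w
  proof -
    have "{u, w} \<in> edges T" using that face unfolding edges_def by auto
    then show ?thesis using face_edge[of "{u, w}"] that int by blast
  qed
qed

theorem mainTheorem4: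
  fixes T :: "pt set set" and m :: nat and r :: int and rr :: "pt set \<Rightarrow> int"
    and \<sigma> \<tau>1 \<tau>2 \<tau>3 :: "pt set" and \<gamma>1 \<gamma>2 \<gamma>3 :: pt
  assumes tri: "triangulation T"
    and r_ge: "r \<ge> -1"
    and rr_vals: "\<forall>\<tau>\<in>int_edges T. rr \<tau> = r \<or> rr \<tau> = -1"
    and acyc: "lower_acyclic T m rr"
    and face: "\<sigma> \<in> T"
    and edges_of_face: "\<tau>1 \<subseteq> \<sigma>" "\<tau>2 \<subseteq> \<sigma>" "\<tau>3 \<subseteq> \<sigma>"
      "card \<tau>1 = 2" "card \<tau>2 = 2" "card \<tau>3 = 2"
      "\<tau>1 \<noteq> \<tau>2" "\<tau>2 \<noteq> \<tau>3" "\<tau>1 \<noteq> \<tau>3"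
    and verts: "\<tau>1 \<inter> \<tau>2 = {\<gamma>1}" "\<tau>2 \<inter> \<tau>3 = {\<gamma>2}" "\<tau>3 \<inter> \<tau>1 = {\<gamma>3}"
    and interior: "\<gamma>1 \<in> int_verts T" "\<gamma>2 \<in> int_verts T" "\<gamma>3 \<in> int_verts T"
    and r_on_edges: "rr \<tau>1 = r" "rr \<tau>2 = r" "rr \<tau>3 = r"
    and no_minus_one: "\<forall>\<gamma>\<in>{\<gamma>1, \<gamma>2, \<gamma>3}. \<forall>\<tau>\<in>int_edges T. \<gamma> \<in> \<tau> \<longrightarrow> rr \<tau> \<noteq> -1"
    and bound: "real m > (of_int (
        (r + \<lceil>real_of_int (r + 1) / real_of_int (min (r + 2) (int (nslopes T \<gamma>1)) - 1)\<rceil>)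
      + (r + \<lceil>real_of_int (r + 1) / real_of_int (min (r + 2) (int (nslopes T \<gamma>2)) - 1)\<rceil>)
      + (r + \<lceil>real_of_int (r + 1) / real_of_int (min (r + 2) (int (nslopes T \<gamma>3)) - 1)\<rceil>)
      - 3)) / 2"
  shows "lower_acyclic T m (\<lambda>\<tau>. if \<tau> \<in> {\<tau>1, \<tau>2, \<tau>3} then -1 else rr \<tau>)"
proof -
  let ?V = "{\<gamma>1, \<gamma>2, \<gamma>3}" and ?s = "\<lambda>\<tau>. if \<tau> \<in> {\<tau>1, \<tau>2, \<tau>3} then -1 else rr \<tau>"
  note F = interior_face[OF tri face edges_of_face verts interior(1,2)]
  have rv: "rr \<tau> = r" if "\<gamma> \<in> ?V" "\<tau> \<in> int_edges T" "\<gamma> \<in> \<tau>" for \<gamma> \<tau>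
    using rr_vals no_minus_one that by blast
  have "\<gamma>1 \<in> \<tau>2" "\<tau>2 \<in> int_edges T" using F(4,9) by simp_all
  then have r: "0 \<le> r" using no_minus_one r_on_edges(2) r_ge by force
  have "Omega r (nslopes T \<gamma>1) + Omega r (nslopes T \<gamma>2) + Omega r (nslopes T \<gamma>3) < 2 * int m + 3"
    by (rule int_less_of_real_half_less, unfold Omega_def, rule bound)
  from Pm_subset_sum_J_vert[OF tri F(1) F(6-8) interior _ r this]
  have split: "Pm m \<subseteq> sum_space ?V (J_vert T m rr)" using rv by blast
  have "H0_vanishes T m ?s"
  proof (rule H0_vanishes_mono)
    show "H0_vanishes T m rr" using acyc unfolding lower_acyclic_def by simp
    show "J_vert T m rr \<gamma> \<subseteq> J_vert T m ?s \<gamma>" for \<gamma> by (intro J_vert_mono J_edge_mono) simp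
  qed
  moreover have "H1_vanishes T m ?s"
  proof (rule H1_vanishes_relax[OF tri _ _ F(11)[unfolded F(2)] split])
    show "H1_vanishes T m rr" using acyc unfolding lower_acyclic_def by simp
    show "?s \<tau> = -1" if "\<tau> \<in> int_edges T" "\<tau> \<subseteq> ?V" for \<tau>
      using F(10)[unfolded F(2), of \<tau>] that unfolding int_edges_def by auto
    show "?s \<tau> = rr \<tau>" if "\<tau> \<in> int_edges T" "\<not> \<tau> \<subseteq> ?V" for \<tau>
      using that F(3-5) by auto
  qed simp
  ultimately show ?thesis unfolding lower_acyclic_def by simp
qed

end
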